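(* Assume that $X_0\in L^\infty$. Then for every $\beta\in\mathbb{R}$ and $\lambda>0$, we have $\widehat H^\prime_{\beta,\lambda}(1-)>-\infty$. Let $$G^*_{\beta,\lambda}(s)=\left(-\widehat H_{\beta,\lambda}^\prime(s)\right)^+,\quad s\in[0,1).$$ Then $G^*_{\beta,\lambda}$ is bounded and uniquely solves both problems $$\max_{G\in\mathscr{Q},\,G\ge0}\ \int_0^1-\tfrac12 G(s)^2ds-\int_0^1G(s)\,dH_{\beta,\lambda}(s)$$ and $$\max_{G\in\mathscr{Q},\,G\ge0}\ \int_0^1-\tfrac12 G(s)^2ds-\int_0^1G(s)\,d\widehat H_{\beta,\lambda}(s).$$ Moreover, these two problems have the same optimal value.
   Context: Setting: complete nonatomic probability space; $\rho\in L^2$ is the stochastic discount factor with $\rho>0$ a.s. and $\mathrm{Var}[\rho]>0$; $Q_X$ denotes the (upper, right-continuous) quantile function of $X$ and $Q_0=Q_{X_0}$ for a benchmark $X_0$; $\mathscr{Q}$ is the set of increasing, right-continuous functions $Q:[0,1)\to\mathbb{R}$ with $\int_0^1Q^2(s)ds<\infty$. For $\beta\in\mathbb{R}$, $\lambda>0$, define $H_{\beta,\lambda}(s)=\int_0^s(2\beta-\lambda Q_\rho(1-t)-2Q_0(t))dt$, $s\in[0,1]$, and let $\widehat H_{\beta,\lambda}$ denote the concave envelope of $H_{\beta,\lambda}$ on $[0,1]$ (the smallest concave function on $[0,1]$ dominating $H_{\beta,\lambda}$). Primes denote right derivatives. *)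

theory Defs
  imports "HOL-Probability.Probability"
begin

definition nonatomic :: "'a measure \<Rightarrow> bool" where
  "nonatomic M \<longleftrightarrow> (\<forall>A\<in>sets M. measure M A > 0 \<longrightarrow>
      (\<exists>B\<in>sets M. B \<subseteq> A \<and> 0 < measure M B \<and> measure M B < measure M A))"

definition quantile :: "'a measure \<Rightarrow> ('a \<Rightarrow> real) \<Rightarrow> real \<Rightarrow> real" where
  "quantile M X s = Inf {x::real. measure M {\<omega>\<in>space M. X \<omega> \<le> x} > s}"

definition hdens :: "'a measure \<Rightarrow> ('a \<Rightarrow> real) \<Rightarrow> ('a \<Rightarrow> real) \<Rightarrow> real \<Rightarrow> real \<Rightarrow> real \<Rightarrow> real" where
  "hdens M \<rho> X0 \<beta> lam t = 2 * \<beta> - lam * quantile M \<rho> (1 - t) - 2 * quantile M X0 t"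

definition Hfun :: "'a measure \<Rightarrow> ('a \<Rightarrow> real) \<Rightarrow> ('a \<Rightarrow> real) \<Rightarrow> real \<Rightarrow> real \<Rightarrow> real \<Rightarrow> real" where
  "Hfun M \<rho> X0 \<beta> lam s = (LINT t:{0..s}|lborel. hdens M \<rho> X0 \<beta> lam t)"

definition concave_envelope :: "(real \<Rightarrow> real) \<Rightarrow> real \<Rightarrow> real" where
  "concave_envelope H s =
     Inf {f s | f. concave_on {0..1} f \<and> (\<forall>x\<in>{0..1}. H x \<le> f x)}"

definition rderiv :: "(real \<Rightarrow> real) \<Rightarrow> real \<Rightarrow> real" where
  "rderiv f x = Lim (at_right 0) (\<lambda>h. (f (x + h) - f x) / h)"

definition Qclass :: "(real \<Rightarrow> real) set" where
  "Qclass = {Q. mono_on {0..<1} Q \<and> (\<forall>s\<in>{0..<1}. continuous (at_right s) Q)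
               \<and> set_integrable lborel {0..<1} (\<lambda>s. (Q s)^2)}"

text \<open>Objective  int_0^1 -G^2/2 ds - int_0^1 G dF, where F is absolutely continuous with
  density dens, so that int G dF = int G(s) dens(s) ds.\<close>
definition objective :: "(real \<Rightarrow> real) \<Rightarrow> (real \<Rightarrow> real) \<Rightarrow> real" where
  "objective dens G = (LINT s:{0..<1}|lborel. - (1/2) * (G s)^2)
                      - (LINT s:{0..<1}|lborel. G s * dens s)"

end

theory Submission
  imports Defs
begin

(*
  The concave envelope Hhat of H is Lipschitz on [0, 1], so its right derivative Hhat' exists,
  is antitone and bounded, and Hhat is the integral of Hhat'. For increasing G >= 0 the
  layer-cake formula gives

    int_0^1 G (h - Hhat') = int_0^oo (Hhat a_u - H a_u) du,   where a_u = inf {G > u},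

  so the objective with dH never exceeds the one with dHhat. Wherever Hhat > H the envelope
  is locally affine, so the superlevel sets of Gstar = (- Hhat')^+ start at contact points
  Hhat = H, and the two objectives agree at Gstar. Maximizing -g^2/2 - g Hhat' pointwise over
  g >= 0 shows that the objective with dHhat loses at least half the integral of (G - Gstar)^2
  at G, which forces G = Gstar for right-continuous G attaining the maximum.
*)

section \<open>Concave functions and their envelopes on the unit interval\<close>

lemma concave_on_slope_le:
  fixes g :: "real \<Rightarrow> real"
  assumes "concave_on I g" "x \<in> I" "y \<in> I" "x < t" "t < y"
  shows "(g y - g x) / (y - x) \<le> (g t - g x) / (t - x)"
    and "(g y - g t) / (y - t) \<le> (g y - g x) / (y - x)"
proof -
  have "convex_on I (\<lambda>x. - g x)"
    using assms(1) by (simp add: concave_on_def)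
  note slopes = convex_on_slope_le[OF this assms(2-5)]
  have neg: "(- g a - - g b) / (a - b) = - ((g b - g a) / (b - a))" for a b
    by (metis minus_diff_eq minus_divide_right minus_diff_minus)
  show "(g y - g x) / (y - x) \<le> (g t - g x) / (t - x)"
    using slopes(1) neg[of x t] neg[of x y] by simp
  show "(g y - g t) / (y - t) \<le> (g y - g x) / (y - x)"
    using slopes(2) neg[of x y] neg[of t y] by simp
qed

lemma concave_on_chord_le:
  fixes g :: "real \<Rightarrow> real"
  assumes "concave_on I g" "p \<in> I" "r \<in> I" "p < r" "p \<le> x" "x \<le> r"
  shows "g p + (g r - g p) / (r - p) * (x - p) \<le> g x"
proof (cases "x = p \<or> x = r")
  case True
  then show ?thesis
    using assms(4) by auto
next
  case False
  then have "(g r - g p) / (r - p) \<le> (g x - g p) / (x - p)"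
    using concave_on_slope_le(1)[OF assms(1-3), of x] assms(5,6) by auto
  then show ?thesis
    using assms(5) False by (simp add: le_divide_eq algebra_simps)
qed

lemma concave_on_le_chord:
  fixes g :: "real \<Rightarrow> real"
  assumes "concave_on I g" "p \<in> I" "r \<in> I" "x \<in> I" "p < r" "x < p \<or> r < x"
  shows "g x \<le> g p + (g r - g p) / (r - p) * (x - p)"
proof -
  define c where "c = (g r - g p) / (r - p)"
  have "g x \<le> g p + c * (x - p)"
  proof (cases "x < p")
    case True
    have "c \<le> (g r - g x) / (r - x)"
      unfolding c_def using concave_on_slope_le(2)[OF assms(1,4,3), of p] True assms(5) by auto
    also have "\<dots> \<le> (g p - g x) / (p - x)"
      using concave_on_slope_le(1)[OF assms(1,4,3), of p] True assms(5) by auto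
    finally have "c * (p - x) \<le> g p - g x"
      using True by (simp add: le_divide_eq)
    then show ?thesis
      by (simp add: algebra_simps)
  next
    case False
    then have "r < x"
      using assms(6) by simp
    then have "(g x - g p) / (x - p) \<le> c"
      unfolding c_def using concave_on_slope_le(1)[OF assms(1,2,4), of r] assms(5) by auto
    then have "g x - g p \<le> c * (x - p)"
      using \<open>r < x\<close> assms(5) by (simp add: divide_le_eq)
    then show ?thesis
      by simp
  qed
  then show ?thesis
    by (simp add: c_def)
qed

lemma concave_on_min:
  fixes f g :: "real \<Rightarrow> real"
  assumes "concave_on S f" "concave_on S g"
  shows "concave_on S (\<lambda>x. min (f x) (g x))"
  unfolding concave_on_iff
proof (intro conjI ballI allI impI)
  show "convex S"
    using assms(1) by (rule concave_on_imp_convex)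
  fix x y u v :: real
  assume xy: "x \<in> S" "y \<in> S" and uv: "0 \<le> u" "0 \<le> v" "u + v = 1"
  let ?c = "u * min (f x) (g x) + v * min (f y) (g y)"
  have "?c \<le> u * f x + v * f y" "?c \<le> u * g x + v * g y"
    using uv by (intro add_mono mult_left_mono; simp)+
  moreover have "u * f x + v * f y \<le> f (u *\<^sub>R x + v *\<^sub>R y)"
    "u * g x + v * g y \<le> g (u *\<^sub>R x + v *\<^sub>R y)"
    using assms xy uv by (auto simp: concave_on_iff)
  ultimately show "?c \<le> min (f (u *\<^sub>R x + v *\<^sub>R y)) (g (u *\<^sub>R x + v *\<^sub>R y))"
    by simp
qed

lemma concave_on_affine: "convex S \<Longrightarrow> concave_on S (\<lambda>x::real. a + b * x)"
  by (rule concave_on_linorderI) (auto simp: algebra_simps)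

lemma concave_envelope_le:
  assumes "concave_on {0..1} f" "\<forall>x\<in>{0..1}. H x \<le> f x" "s \<in> {0..1}"
  shows "concave_envelope H s \<le> f s"
  unfolding concave_envelope_def
proof (rule cInf_lower)
  show "bdd_below {f s |f. concave_on {0..1} f \<and> (\<forall>x\<in>{0..1}. H x \<le> f x)}"
    by (rule bdd_belowI[of _ "H s"]) (use assms(3) in auto)
qed (use assms(1,2) in auto)

lemma concave_majorants_nonempty:
  fixes H :: "real \<Rightarrow> real"
  assumes "bdd_above (H ` {0..1})"
  shows "{f s |f. concave_on {0..1} f \<and> (\<forall>x\<in>{0..1}. H x \<le> f x)} \<noteq> {}"
proof -
  obtain c where "\<forall>x\<in>{0..1}. H x \<le> c"
    using assms by (auto simp: bdd_above_def)
  then show ?thesis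
    by (auto intro!: exI[of _ "\<lambda>_. c"] simp: concave_on_const convex_real_interval)
qed

lemma concave_envelope_ge:
  assumes "bdd_above (H ` {0..1})" "s \<in> {0..1}"
  shows "H s \<le> concave_envelope H s"
  unfolding concave_envelope_def
  by (rule cInf_greatest[OF concave_majorants_nonempty[OF assms(1)]]) (use assms(2) in auto)

lemma concave_on_concave_envelope:
  assumes "bdd_above (H ` {0..1})"
  shows "concave_on {0..1} (concave_envelope H)"
proof (rule concave_on_linorderI)
  fix t x y :: real
  assume t: "0 < t" "t < 1" and xy: "x \<in> {0..1}" "y \<in> {0..1}"
  let ?z = "(1 - t) *\<^sub>R x + t *\<^sub>R y"
  have "(1 - t) * x + t * y \<le> (1 - t) * 1 + t * 1"
    using t xy by (intro add_mono mult_left_mono) auto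
  then have z: "?z \<in> {0..1}"
    using t xy by simp
  show "(1 - t) * concave_envelope H x + t * concave_envelope H y \<le> concave_envelope H ?z"
    unfolding concave_envelope_def[of H ?z]
  proof (rule cInf_greatest)
    show "{f ?z |f. concave_on {0..1} f \<and> (\<forall>x\<in>{0..1}. H x \<le> f x)} \<noteq> {}"
      by (rule concave_majorants_nonempty[OF assms])
  next
    fix v assume "v \<in> {f ?z |f. concave_on {0..1} f \<and> (\<forall>x\<in>{0..1}. H x \<le> f x)}"
    then obtain f where v: "v = f ?z" and f: "concave_on {0..1} f" "\<forall>x\<in>{0..1}. H x \<le> f x"
      by blast
    have "(1 - t) * concave_envelope H x + t * concave_envelope H y \<le> (1 - t) * f x + t * f y"
      using concave_envelope_le[OF f] xy t by (intro add_mono mult_left_mono) auto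
    also have "\<dots> \<le> v"
      unfolding v using f xy t by (intro concave_onD) auto
    finally show "(1 - t) * concave_envelope H x + t * concave_envelope H y \<le> v" .
  qed
qed simp

lemma min_le_linear_interpolation:
  fixes p r x u v :: real
  assumes "p < r" "p \<le> x" "x \<le> r"
  shows "min u v \<le> u + (v - u) / (r - p) * (x - p)"
proof -
  define \<theta> where "\<theta> = (x - p) / (r - p)"
  have \<theta>: "0 \<le> \<theta>" "\<theta> \<le> 1"
    using assms by (auto simp: \<theta>_def divide_le_eq)
  have "(1 - \<theta>) * u + \<theta> * v - min u v = (1 - \<theta>) * (u - min u v) + \<theta> * (v - min u v)"
    by (simp add: algebra_simps)
  also have "\<dots> \<ge> 0"
    using \<theta> by (intro add_nonneg_nonneg mult_nonneg_nonneg) auto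
  finally have "min u v \<le> (1 - \<theta>) * u + \<theta> * v"
    by simp
  also have "\<dots> = u + (v - u) * \<theta>"
    by (simp add: algebra_simps)
  finally show ?thesis
    by (simp add: \<theta>_def)
qed

section \<open>Integration on the unit interval\<close>

text \<open>Partition \<open>[a, b]\<close> into \<open>n\<close> equal pieces; the bounds of the pieces telescope.\<close>
lemma increment_le_uniform_partition_bound:
  fixes \<Psi> d :: "real \<Rightarrow> real"
  assumes "a \<le> b" "n \<ge> 1"
    and increments: "\<And>x y. a \<le> x \<Longrightarrow> x \<le> y \<Longrightarrow> y \<le> b \<Longrightarrow> \<bar>\<Psi> y - \<Psi> x\<bar> \<le> (d x - d y) * (y - x)"
  shows "\<bar>\<Psi> b - \<Psi> a\<bar> \<le> (d a - d b) * (b - a) / real n"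
proof -
  define h where "h = (b - a) / real n"
  define x where "x i = a + real i * h" for i :: nat
  have h: "0 \<le> h" and x_0: "x 0 = a" and x_n: "x n = b"
    using assms(1,2) by (auto simp: h_def x_def)
  have x_step: "a \<le> x i" "x i \<le> x (Suc i)" "i < n \<Longrightarrow> x (Suc i) \<le> b" for i
  proof -
    show "a \<le> x i" "x i \<le> x (Suc i)"
      using h by (simp_all add: x_def algebra_simps)
    assume "i < n"
    then have "real (Suc i) * h \<le> real n * h"
      using h by (intro mult_right_mono) auto
    then show "x (Suc i) \<le> b"
      using assms(2) by (simp add: x_def h_def)
  qed
  have "\<bar>\<Psi> b - \<Psi> a\<bar> = \<bar>\<Sum>i<n. \<Psi> (x (Suc i)) - \<Psi> (x i)\<bar>"
    by (simp add: sum_lessThan_telescope[of "\<lambda>i. \<Psi> (x i)"] x_0 x_n)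
  also have "\<dots> \<le> (\<Sum>i<n. (d (x i) - d (x (Suc i))) * h)"
  proof (intro order.trans[OF sum_abs] sum_mono)
    fix i assume "i \<in> {..<n}"
    then have "\<bar>\<Psi> (x (Suc i)) - \<Psi> (x i)\<bar> \<le> (d (x i) - d (x (Suc i))) * (x (Suc i) - x i)"
      using increments x_step by simp
    moreover have "x (Suc i) - x i = h"
      by (simp add: x_def algebra_simps)
    ultimately show "\<bar>\<Psi> (x (Suc i)) - \<Psi> (x i)\<bar> \<le> (d (x i) - d (x (Suc i))) * h"
      by simp
  qed
  also have "\<dots> = (d a - d b) * h"
    by (simp add: sum_distrib_right[symmetric] sum_lessThan_telescope'[of "\<lambda>i. d (x i)"] x_0 x_n)
  finally show ?thesis
    by (simp add: h_def)
qed

lemma eq_endpoints_if_increments_bounded: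
  fixes \<Psi> d :: "real \<Rightarrow> real"
  assumes "a \<le> b"
    and "\<And>x y. a \<le> x \<Longrightarrow> x \<le> y \<Longrightarrow> y \<le> b \<Longrightarrow> \<bar>\<Psi> y - \<Psi> x\<bar> \<le> (d x - d y) * (y - x)"
  shows "\<Psi> b = \<Psi> a"
proof -
  have "(\<lambda>n. (d a - d b) * (b - a) / real n) \<longlonglongrightarrow> 0"
    by (rule lim_const_over_n)
  then have "\<bar>\<Psi> b - \<Psi> a\<bar> \<le> 0"
    using increment_le_uniform_partition_bound[OF assms(1) _ assms(2)] by (intro LIMSEQ_le_const) auto
  then show ?thesis
    by simp
qed

lemma set_integrable_bounded:
  fixes f :: "real \<Rightarrow> real"
  assumes "f \<in> borel_measurable borel" "\<And>x. \<bar>f x\<bar> \<le> B" "A \<in> sets borel" "emeasure lborel A < \<infinity>"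
  shows "set_integrable lborel A f"
  unfolding set_integrable_def
  by (rule integrableI_bounded_set_indicator[where B = B]) (use assms in auto)

lemma set_integral_nonneg:
  fixes f :: "'a \<Rightarrow> real"
  shows "(\<And>x. x \<in> A \<Longrightarrow> 0 \<le> f x) \<Longrightarrow> 0 \<le> (LINT x:A|M. f x)"
  unfolding set_lebesgue_integral_def
  by (rule Bochner_Integration.integral_nonneg) (auto split: split_indicator)

lemma set_borel_measurable_mono_on:
  fixes G :: "real \<Rightarrow> real"
  assumes "mono_on A G" "A \<in> sets borel"
  shows "set_borel_measurable borel A G"
proof -
  have "G \<in> borel_measurable (restrict_space borel A)"
    using assms(1) by (rule borel_measurable_mono_on_fnc)
  then have "(\<lambda>x. if x \<in> A then G x else 0) \<in> borel_measurable borel"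
    using assms(2) by (subst (asm) measurable_restrict_space_iff) auto
  moreover have "(\<lambda>x. indicator A x *\<^sub>R G x) = (\<lambda>x. if x \<in> A then G x else 0)"
    by (auto simp: indicator_def)
  ultimately show ?thesis
    by (simp add: set_borel_measurable_def)
qed

lemma set_borel_measurable_mult:
  fixes G f :: "real \<Rightarrow> real"
  assumes "set_borel_measurable M A G" "set_borel_measurable M A f"
  shows "set_borel_measurable M A (\<lambda>s. G s * f s)"
proof -
  have "(\<lambda>x. (indicator A x *\<^sub>R G x) * (indicator A x *\<^sub>R f x)) \<in> borel_measurable M"
    using assms unfolding set_borel_measurable_def by (rule borel_measurable_times)
  moreover have "(\<lambda>x. (indicator A x *\<^sub>R G x) * (indicator A x *\<^sub>R f x)) = (\<lambda>x. indicator A x *\<^sub>R (G x * f x))"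
    by (auto simp: indicator_def)
  ultimately show ?thesis
    by (simp add: set_borel_measurable_def)
qed

lemma abs_le_1_plus_sq: "\<bar>y::real\<bar> \<le> 1 + y\<^sup>2"
proof (cases "\<bar>y\<bar> \<le> 1")
  case False
  then have "\<bar>y\<bar> * 1 \<le> \<bar>y\<bar> * \<bar>y\<bar>"
    by (intro mult_left_mono) auto
  then show ?thesis
    by (simp add: power2_eq_square abs_mult_self_eq)
next
  case True
  then show ?thesis
    using zero_le_power2[of y] by linarith
qed

lemma set_integrable_mult_bounded:
  fixes G f :: "real \<Rightarrow> real"
  assumes G: "set_borel_measurable borel A G" "set_integrable lborel A (\<lambda>s. (G s)\<^sup>2)"
    and f: "set_borel_measurable borel A f" "\<And>s. s \<in> A \<Longrightarrow> \<bar>f s\<bar> \<le> B"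
    and A: "A \<in> sets borel" "emeasure lborel A < \<infinity>"
  shows "set_integrable lborel A (\<lambda>s. G s * f s)"
proof (rule set_integrable_bound)
  have "set_integrable lborel A (\<lambda>_. 1::real)"
    using A by (intro set_integrable_bounded[where B = 1]) auto
  then show "set_integrable lborel A (\<lambda>s. \<bar>B\<bar> * (1 + (G s)\<^sup>2))"
    using G(2) by (intro set_integrable_mult_right set_integral_add(1))
  show "set_borel_measurable lborel A (\<lambda>s. G s * f s)"
    using set_borel_measurable_mult[OF G(1) f(1)] by (simp add: set_borel_measurable_def)
  have "\<bar>G s * f s\<bar> \<le> \<bar>B\<bar> * (1 + (G s)\<^sup>2)" if "s \<in> A" for s
  proof -
    have "\<bar>G s\<bar> * \<bar>f s\<bar> \<le> (1 + (G s)\<^sup>2) * \<bar>B\<bar>"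
      using abs_le_1_plus_sq[of "G s"] f(2)[OF that] by (intro mult_mono) auto
    then show ?thesis
      by (simp add: abs_mult mult.commute)
  qed
  then show "AE s\<in>A in lborel. norm (G s * f s) \<le> norm (\<bar>B\<bar> * (1 + (G s)\<^sup>2))"
    by (intro AE_I2) (simp add: abs_mult)
qed

lemma set_integrable_bounded_mult:
  fixes G f :: "real \<Rightarrow> real"
  assumes "set_borel_measurable borel A G" "\<And>s. s \<in> A \<Longrightarrow> \<bar>G s\<bar> \<le> C"
    and "set_integrable lborel A f"
  shows "set_integrable lborel A (\<lambda>s. G s * f s)"
proof (rule set_integrable_bound)
  show "set_integrable lborel A (\<lambda>s. C * \<bar>f s\<bar>)"
    using assms(3) by (intro set_integrable_mult_right set_integrable_abs)
  have "set_borel_measurable borel A f"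
    using assms(3) unfolding set_integrable_def set_borel_measurable_def
    by (simp add: borel_measurable_integrable)
  then show "set_borel_measurable lborel A (\<lambda>s. G s * f s)"
    using set_borel_measurable_mult[OF assms(1)] by (simp add: set_borel_measurable_def)
  have "\<bar>G s * f s\<bar> \<le> C * \<bar>f s\<bar>" if "s \<in> A" for s
    using assms(2)[OF that] by (simp add: abs_mult mult_right_mono)
  then show "AE s\<in>A in lborel. norm (G s * f s) \<le> norm (C * \<bar>f s\<bar>)"
    by (intro AE_I2) (auto intro: order.trans[OF _ abs_ge_self])
qed

lemma Qclass_set_borel_measurable:
  "G \<in> Qclass \<Longrightarrow> A \<subseteq> {0..<1} \<Longrightarrow> A \<in> sets borel \<Longrightarrow> set_borel_measurable borel A G"
  by (rule set_borel_measurable_mono_on) (auto simp: Qclass_def intro: mono_on_subset)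

lemma Qclass_if_bounded:
  fixes G :: "real \<Rightarrow> real"
  assumes "mono_on {0..<1} G" "\<And>s. s \<in> {0..<1} \<Longrightarrow> \<bar>G s\<bar> \<le> C"
    and "\<And>s. s \<in> {0..<1} \<Longrightarrow> continuous (at_right s) G"
  shows "G \<in> Qclass"
proof -
  have G: "set_borel_measurable borel {0..<1} G"
    using assms(1) by (rule set_borel_measurable_mono_on) simp
  have "set_integrable lborel {0..<1} (\<lambda>_::real. C\<^sup>2)"
    by (rule set_integrable_bounded[where B = "C\<^sup>2"]) auto
  then have "set_integrable lborel {0..<1} (\<lambda>s. (G s)\<^sup>2)"
  proof (rule set_integrable_bound)
    show "set_borel_measurable lborel {0..<1} (\<lambda>s. (G s)\<^sup>2)"
      using set_borel_measurable_mult[OF G G] by (simp add: power2_eq_square set_borel_measurable_def)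
    have "\<bar>G s\<bar>\<^sup>2 \<le> C\<^sup>2" if "s \<in> {0..<1}" for s
      using assms(2)[OF that] by (intro power_mono) auto
    then show "AE s\<in>{0..<1} in lborel. norm ((G s)\<^sup>2) \<le> norm (C\<^sup>2)"
      by (intro AE_I2) simp
  qed
  then show ?thesis
    using assms by (simp add: Qclass_def)
qed

lemma mono_on_superlevel_set:
  fixes G :: "real \<Rightarrow> real"
  assumes mono: "mono_on {0..<1} G" and nonempty: "{s\<in>{0..<1}. u < G s} \<noteq> {}"
  defines "S \<equiv> {s\<in>{0..<1}. u < G s}"
  shows "Inf S \<in> {0..<1}" "{Inf S<..<1} \<subseteq> S" "S \<subseteq> {Inf S..<1}"
proof -
  have bdd: "bdd_below S"
    by (rule bdd_belowI[of _ 0]) (simp add: S_def)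
  obtain s\<^sub>0 where s\<^sub>0: "s\<^sub>0 \<in> S"
    using nonempty by (auto simp: S_def)
  have "0 \<le> Inf S"
    using s\<^sub>0 by (intro cInf_greatest) (auto simp: S_def)
  moreover have "Inf S \<le> s\<^sub>0" "s\<^sub>0 < 1"
    using cInf_lower[OF s\<^sub>0 bdd] s\<^sub>0 by (auto simp: S_def)
  ultimately show "Inf S \<in> {0..<1}"
    by simp
  show "S \<subseteq> {Inf S..<1}"
    using cInf_lower[OF _ bdd] by (auto simp: S_def)
  show "{Inf S<..<1} \<subseteq> S"
  proof
    fix x assume x: "x \<in> {Inf S<..<1}"
    then obtain s where s: "s \<in> S" "s < x"
      using cInf_less_iff[OF _ bdd] s\<^sub>0 by auto
    then have "G s \<le> G x"
      using x by (intro mono_onD[OF mono]) (auto simp: S_def)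
    then show "x \<in> S"
      using s x by (auto simp: S_def)
  qed
qed

text \<open>Layer-cake representation \<open>G(s) = \<integral>\<^sub>0\<^sup>\<infinity> [u < G(s)] du\<close>, combined with Fubini.\<close>
lemma layer_cake:
  fixes G \<phi> :: "real \<Rightarrow> real"
  assumes A: "A \<in> sets borel" and G: "set_borel_measurable borel A G" "\<And>s. s \<in> A \<Longrightarrow> 0 \<le> G s"
    and \<phi>: "\<phi> \<in> borel_measurable borel" and integrable: "set_integrable lborel A (\<lambda>s. G s * \<phi> s)"
  shows "(LINT s:A|lborel. G s * \<phi> s) = (LINT u:{0..}|lborel. (LINT s:{s\<in>A. u < G s}|lborel. \<phi> s))"
proof -
  define Gz where "Gz s = indicator A s * G s" for s
  define \<phi>z where "\<phi>z s = indicator A s * \<phi> s" for s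
  define f where "f s u = (if 0 \<le> u \<and> u < Gz s then \<phi>z s else 0)" for s u :: real
  have "Gz = (\<lambda>x. indicator A x *\<^sub>R G x)"
    by (simp add: Gz_def fun_eq_iff)
  then have Gz: "Gz \<in> borel_measurable borel" "0 \<le> Gz s" for s
    using G by (simp_all add: set_borel_measurable_def indicator_def)
  have "(\<lambda>(s, u). f s u) \<in> borel_measurable (lborel \<Otimes>\<^sub>M lborel)"
    unfolding f_def \<phi>z_def using Gz(1) \<phi> A by measurable
  then have f_measurable: "(\<lambda>x. f (fst x) (snd x)) \<in> borel_measurable (lborel \<Otimes>\<^sub>M lborel)"
    by (simp add: case_prod_beta')
  have f_eq: "f s = (\<lambda>u. indicator {0..<Gz s} u * \<phi>z s)" for s
    by (auto simp: f_def indicator_def)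
  have integral_u: "(LBINT u. f s u) = Gz s * \<phi>z s" "(LBINT u. \<bar>f s u\<bar>) = Gz s * \<bar>\<phi>z s\<bar>" for s
    using Gz(2)[of s] by (simp_all add: f_eq abs_mult)
  have Gz_\<phi>z: "(\<lambda>s. Gz s * \<phi>z s) = (\<lambda>s. indicator A s *\<^sub>R (G s * \<phi> s))"
    by (auto simp: Gz_def \<phi>z_def indicator_def)
  have "integrable (lborel \<Otimes>\<^sub>M lborel) (\<lambda>x. f (fst x) (snd x))"
  proof (rule lborel_pair.Fubini_integrable[OF f_measurable])
    have "(\<lambda>s. Gz s * \<bar>\<phi>z s\<bar>) = (\<lambda>s. \<bar>indicator A s *\<^sub>R (G s * \<phi> s)\<bar>)"
      using G(2) by (auto simp: Gz_def \<phi>z_def indicator_def abs_mult)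
    then show "integrable lborel (\<lambda>s. LBINT u. norm (f (fst (s, u)) (snd (s, u))))"
      using integrable_abs[OF integrable[unfolded set_integrable_def]] by (simp add: integral_u)
    show "AE s in lborel. integrable lborel (\<lambda>u. f (fst (s, u)) (snd (s, u)))"
      using Gz(2) by (auto simp: f_eq intro!: integrable_real_indicator)
  qed
  then have "(LBINT u. LBINT s. f s u) = (LBINT s. LBINT u. f s u)"
    by (intro lborel_pair.Fubini_integral) (simp add: case_prod_beta')
  also have "\<dots> = (LINT s:A|lborel. G s * \<phi> s)"
    by (simp add: integral_u Gz_\<phi>z set_lebesgue_integral_def)
  finally have "(LINT s:A|lborel. G s * \<phi> s) = (LBINT u. LBINT s. f s u)" ..
  moreover have "(LBINT s. f s u) = indicator {0..} u *\<^sub>R (LINT s:{s\<in>A. u < G s}|lborel. \<phi> s)" for u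
    unfolding set_lebesgue_integral_def
    by (cases "0 \<le> u") (auto simp: f_def Gz_def \<phi>z_def indicator_def intro!: Bochner_Integration.integral_cong)
  ultimately show ?thesis
    by (simp add: set_lebesgue_integral_def[of lborel "{0..}"])
qed

lemma eq_if_right_continuous_sq_integral_zero:
  fixes G F :: "real \<Rightarrow> real"
  assumes G: "\<And>s. s \<in> {0..<1} \<Longrightarrow> continuous (at_right s) G"
    and F: "\<And>s. s \<in> {0..<1} \<Longrightarrow> continuous (at_right s) F"
    and integrable: "set_integrable lborel {0..<1} (\<lambda>s. (G s - F s)\<^sup>2)"
    and zero: "(LINT s:{0..<1}|lborel. (G s - F s)\<^sup>2) = 0"
    and s: "s \<in> {0..<1}"
  shows "G s = F s"
proof (rule ccontr)
  assume "G s \<noteq> F s"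
  define g where "g x = (G x - F x)\<^sup>2" for x
  have "(g \<longlongrightarrow> g s) (at_right s)"
    using G[OF s] F[OF s] unfolding g_def continuous_within by (intro tendsto_intros)
  moreover have "0 < g s"
    using \<open>G s \<noteq> F s\<close> by (simp add: g_def)
  ultimately have "\<forall>\<^sub>F x in at_right s. 0 < g x"
    by (intro order_tendstoD(1))
  then obtain b where b: "s < b" "\<And>y. s < y \<Longrightarrow> y < b \<Longrightarrow> 0 < g y"
    unfolding eventually_at_right_field by blast
  have "AE x in lborel. indicator {0..<1} x *\<^sub>R g x = 0"
    using integrable zero
    by (subst integral_nonneg_eq_0_iff_AE[symmetric])
       (auto simp: set_integrable_def set_lebesgue_integral_def g_def)
  then have "AE x in lborel. x \<notin> {s<..<min b 1}"
  proof (rule eventually_mono, intro notI)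
    fix x assume "indicator {0..<1} x *\<^sub>R g x = 0" "x \<in> {s<..<min b 1}"
    then show False
      using b(2)[of x] s by (auto simp: indicator_def split: if_splits)
  qed
  then have "{s<..<min b 1} \<in> null_sets lborel"
    by (subst AE_iff_null_sets) auto
  then have "emeasure lborel {s<..<min b 1} = 0"
    by auto
  then show False
    using b s by simp
qed

lemma set_integrable_inverse_sqrt: "set_integrable lborel {0<..<1} (\<lambda>t::real. 1 / sqrt t)"
proof -
  have "(\<lambda>x::real. x powr (-1/2)) absolutely_integrable_on {0<..1}"
    by (intro nonnegative_absolutely_integrable_1 integrable_on_powr_from_0') auto
  moreover have "(\<lambda>x::real. indicator {0<..1} x *\<^sub>R x powr (-1/2)) \<in> borel_measurable lborel"
    by measurable
  ultimately have "set_integrable lborel {0<..1} (\<lambda>x::real. x powr (-1/2))"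
    unfolding absolutely_integrable_on_def set_integrable_def by (subst (asm) integrable_completion)
  then have "set_integrable lborel {0<..<1} (\<lambda>x::real. x powr (-1/2))"
    by (rule set_integrable_subset) auto
  moreover have "x powr (-1/2) = 1 / sqrt x" if "0 < x" for x :: real
    using that by (simp add: powr_minus_divide powr_half_sqrt)
  ultimately show ?thesis
    by (subst set_integrable_cong[OF refl refl, where f' = "\<lambda>x. x powr (-1/2)"]) auto
qed

lemma set_integrable_if_inverse_sqrt_bound:
  fixes f :: "real \<Rightarrow> real"
  assumes "f \<in> borel_measurable borel" "\<And>t. 0 < t \<Longrightarrow> t < 1 \<Longrightarrow> \<bar>f t\<bar> \<le> a + b / sqrt t"
  shows "set_integrable lborel {0..1} f"
proof -
  have "set_integrable lborel {0<..<1} (\<lambda>t. a + b * (1 / sqrt t))"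
    by (intro set_integral_add(1) set_integrable_mult_right set_integrable_inverse_sqrt
        set_integrable_bounded[where B = "\<bar>a\<bar>"]) auto
  then have "set_integrable lborel {0<..<1} f"
  proof (rule set_integrable_bound)
    show "set_borel_measurable lborel {0<..<1} f"
      unfolding set_borel_measurable_def using assms(1) by measurable
    show "AE t\<in>{0<..<1} in lborel. norm (f t) \<le> norm (a + b * (1 / sqrt t))"
      using assms(2) by (intro AE_I2) (auto intro: order.trans[OF _ abs_ge_self])
  qed
  then show ?thesis
    by (subst set_integrable_discrete_difference[where X = "{0, 1}"]) auto
qed

section \<open>The envelope of a function bounded by two lines\<close>

text \<open>The two lines also bound the concave envelope, so its slopes lie in \<open>[-K', K]\<close>.\<close>
locale wedge_bounded =
  fixes H :: "real \<Rightarrow> real" and K K' :: real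
  assumes continuous_H: "continuous_on {0..1} H"
    and H_0: "H 0 = 0"
    and K_nonneg: "0 \<le> K" and K'_nonneg: "0 \<le> K'"
    and H_le_left: "\<And>x. x \<in> {0..1} \<Longrightarrow> H x \<le> K * x"
    and H_le_right: "\<And>x. x \<in> {0..1} \<Longrightarrow> H x \<le> H 1 + K' * (1 - x)"
begin

abbreviation "Hhat \<equiv> concave_envelope H"

lemma bdd_above_H: "bdd_above (H ` {0..1})"
proof (rule bdd_aboveI2)
  fix x :: real assume "x \<in> {0..1}"
  then show "H x \<le> K"
    using H_le_left[of x] K_nonneg mult_left_le[of x K] by auto
qed

lemma H_le_Hhat: "x \<in> {0..1} \<Longrightarrow> H x \<le> Hhat x"
  by (rule concave_envelope_ge[OF bdd_above_H])

lemma concave_Hhat: "concave_on {0..1} Hhat"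
  by (rule concave_on_concave_envelope[OF bdd_above_H])

lemma Hhat_le_left: "x \<in> {0..1} \<Longrightarrow> Hhat x \<le> K * x"
  using concave_envelope_le[OF concave_on_affine[of "{0..1}" 0 K]] H_le_left
  by (simp add: convex_real_interval)

lemma Hhat_le_right:
  assumes "x \<in> {0..1}"
  shows "Hhat x \<le> H 1 + K' * (1 - x)"
proof -
  have "Hhat x \<le> (H 1 + K') + (- K') * x"
  proof (rule concave_envelope_le[OF concave_on_affine _ assms])
    show "\<forall>x\<in>{0..1}. H x \<le> H 1 + K' + - K' * x"
      using H_le_right by (simp add: algebra_simps)
  qed (simp add: convex_real_interval)
  then show ?thesis
    by (simp add: algebra_simps)
qed

lemma Hhat_0: "Hhat 0 = 0"
  using Hhat_le_left[of 0] H_le_Hhat[of 0] H_0 by simp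

lemma Hhat_1: "Hhat 1 = H 1"
  using Hhat_le_right[of 1] H_le_Hhat[of 1] by simp

lemma Hhat_slope_le:
  assumes "0 \<le> x" "x < y" "y \<le> 1"
  shows "(Hhat y - Hhat x) / (y - x) \<le> K"
proof -
  have "(Hhat y - Hhat 0) / (y - 0) \<le> K"
    using Hhat_le_left[of y] Hhat_0 assms by (simp add: divide_le_eq mult.commute)
  moreover have "(Hhat y - Hhat x) / (y - x) \<le> (Hhat y - Hhat 0) / (y - 0)" if "x \<noteq> 0"
    using concave_on_slope_le(2)[OF concave_Hhat, of 0 y x] assms that by auto
  ultimately show ?thesis
    by (cases "x = 0") auto
qed

lemma Hhat_slope_ge:
  assumes "0 \<le> x" "x < y" "y \<le> 1"
  shows "- K' \<le> (Hhat y - Hhat x) / (y - x)"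
proof -
  have "- K' \<le> (Hhat 1 - Hhat x) / (1 - x)"
    using Hhat_le_right[of x] Hhat_1 assms by (simp add: le_divide_eq algebra_simps)
  moreover have "(Hhat 1 - Hhat x) / (1 - x) \<le> (Hhat y - Hhat x) / (y - x)" if "y \<noteq> 1"
    using concave_on_slope_le(1)[OF concave_Hhat, of x 1 y] assms that by auto
  ultimately show ?thesis
    by (cases "y = 1") auto
qed

lemma lipschitz_Hhat: "(K + K')-lipschitz_on {0..1} Hhat"
proof (rule lipschitz_onI)
  have *: "\<bar>Hhat y - Hhat x\<bar> \<le> (K + K') * (y - x)" if "0 \<le> x" "x < y" "y \<le> 1" for x y
  proof -
    have "\<bar>(Hhat y - Hhat x) / (y - x)\<bar> \<le> K + K'"
      using Hhat_slope_le[OF that] Hhat_slope_ge[OF that] K_nonneg K'_nonneg by linarith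
    then show ?thesis
      using that by (simp add: abs_divide divide_le_eq mult.commute)
  qed
  fix x y :: real assume "x \<in> {0..1}" "y \<in> {0..1}"
  then show "dist (Hhat x) (Hhat y) \<le> (K + K') * dist x y"
    using *[of x y] *[of y x] by (cases x y rule: linorder_cases) (auto simp: dist_real_def abs_minus_commute)
qed (use K_nonneg K'_nonneg in simp)

lemma continuous_on_Hhat: "continuous_on {0..1} Hhat"
  by (rule lipschitz_on_continuous_on[OF lipschitz_Hhat])

definition slope :: "real \<Rightarrow> real \<Rightarrow> real" where
  "slope s \<delta> = (Hhat (s + \<delta>) - Hhat s) / \<delta>"

text \<open>Beyond \<open>1\<close> the right derivative is continued by its lower bound \<open>-K'\<close>, which keeps it
  antitone on \<open>[0, \<infinity>)\<close>; below \<open>0\<close> it is set to \<open>0\<close>.\<close>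
definition Hhat' :: "real \<Rightarrow> real" where
  "Hhat' s = (if s < 0 then 0 else if s < 1 then Sup (slope s ` {0<..1 - s}) else - K')"

lemma slope_antimono:
  assumes "0 \<le> s" "0 < a" "a \<le> b" "b \<le> 1 - s"
  shows "slope s b \<le> slope s a"
  using concave_on_slope_le(1)[OF concave_Hhat, of s "s + b" "s + a"] assms
  by (cases "a = b") (auto simp: slope_def)

lemma slope_le: "0 \<le> s \<Longrightarrow> 0 < \<delta> \<Longrightarrow> \<delta> \<le> 1 - s \<Longrightarrow> slope s \<delta> \<le> K"
  unfolding slope_def using Hhat_slope_le[of s "s + \<delta>"] by auto

lemma bdd_above_slopes: "0 \<le> s \<Longrightarrow> bdd_above (slope s ` {0<..1 - s})"
  by (rule bdd_aboveI2[of _ _ K]) (auto intro: slope_le)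

lemma slope_le_Hhat':
  assumes "0 \<le> s" "0 < \<delta>" "\<delta> \<le> 1 - s"
  shows "slope s \<delta> \<le> Hhat' s"
  using assms cSup_upper[OF _ bdd_above_slopes[OF assms(1)], of "slope s \<delta>"]
  by (auto simp: Hhat'_def)

lemma Hhat'_le: "Hhat' s \<le> K"
  using K_nonneg K'_nonneg
  by (auto simp: Hhat'_def intro!: cSup_least slope_le)

lemma Hhat'_ge: "- K' \<le> Hhat' s"
proof -
  have "- K' \<le> slope s (1 - s)" if "0 \<le> s" "s < 1"
    using Hhat_slope_ge[of s 1] that by (simp add: slope_def)
  then show ?thesis
    using slope_le_Hhat'[of s "1 - s"] K'_nonneg by (auto simp: Hhat'_def)
qed

lemma abs_Hhat'_le: "\<bar>Hhat' s\<bar> \<le> K + K'"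
  using Hhat'_le[of s] Hhat'_ge[of s] K_nonneg K'_nonneg by linarith

lemma slope_tendsto_Hhat':
  assumes "0 \<le> s" "s < 1"
  shows "(slope s \<longlongrightarrow> Hhat' s) (at_right 0)"
proof (rule increasing_tendsto)
  show "\<forall>\<^sub>F \<delta> in at_right 0. slope s \<delta> \<le> Hhat' s"
    using eventually_at_right_real[of 0 "1 - s"] assms
    by (auto elim!: eventually_mono intro: slope_le_Hhat')
  fix a assume "a < Hhat' s"
  then obtain \<delta>\<^sub>0 where \<delta>\<^sub>0: "\<delta>\<^sub>0 \<in> {0<..1 - s}" "a < slope s \<delta>\<^sub>0"
    using less_cSup_iff[OF _ bdd_above_slopes[OF assms(1)]] assms by (auto simp: Hhat'_def)
  show "\<forall>\<^sub>F \<delta> in at_right 0. a < slope s \<delta>"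
    using eventually_at_right_real[of 0 \<delta>\<^sub>0] \<delta>\<^sub>0 assms
    by (auto elim!: eventually_mono dest: slope_antimono[of s _ \<delta>\<^sub>0])
qed

lemma slope_eq: "slope s = (\<lambda>h. (Hhat (s + h) - Hhat s) / h)"
  by (rule ext) (simp add: slope_def)

lemma rderiv_Hhat:
  assumes "0 \<le> s" "s < 1"
  shows "rderiv Hhat s = Hhat' s"
  unfolding rderiv_def
  by (rule tendsto_Lim) (use slope_tendsto_Hhat'[OF assms, unfolded slope_eq] in auto)

lemma Hhat_has_right_derivative:
  "\<forall>s\<in>{0..<1}. ((\<lambda>h. (Hhat (s + h) - Hhat s) / h) \<longlongrightarrow> rderiv Hhat s) (at_right 0)"
  using slope_tendsto_Hhat'[unfolded slope_eq] rderiv_Hhat by simp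

lemma Hhat'_le_slope_left:
  assumes "0 \<le> x" "x < s" "s < 1"
  shows "Hhat' s \<le> (Hhat s - Hhat x) / (s - x)"
proof -
  have "slope s \<delta> \<le> (Hhat s - Hhat x) / (s - x)" if "0 < \<delta>" "\<delta> \<le> 1 - s" for \<delta>
  proof -
    have "slope s \<delta> \<le> (Hhat (s + \<delta>) - Hhat x) / (s + \<delta> - x)"
      using concave_on_slope_le(2)[OF concave_Hhat, of x "s + \<delta>" s] that assms
      by (auto simp: slope_def)
    also have "\<dots> \<le> (Hhat s - Hhat x) / (s - x)"
      using concave_on_slope_le(1)[OF concave_Hhat, of x "s + \<delta>" s] that assms by auto
    finally show ?thesis .
  qed
  then show ?thesis
    using assms by (auto simp: Hhat'_def intro!: cSup_least)
qed

lemma slope_right_le_Hhat':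
  "0 \<le> s \<Longrightarrow> s < y \<Longrightarrow> y \<le> 1 \<Longrightarrow> (Hhat y - Hhat s) / (y - s) \<le> Hhat' s"
  using slope_le_Hhat'[of s "y - s"] by (simp add: slope_def)

lemma Hhat'_antimono:
  assumes "0 \<le> x" "x \<le> y"
  shows "Hhat' y \<le> Hhat' x"
proof (cases "x = y \<or> 1 \<le> y")
  case True
  then show ?thesis
    using Hhat'_ge[of x] by (auto simp: Hhat'_def)
next
  case False
  then show ?thesis
    using Hhat'_le_slope_left[of x y] slope_right_le_Hhat'[of x y] assms by auto
qed

lemma Hhat_tendsto_at_right:
  assumes "0 \<le> s" "s < 1"
  shows "(Hhat \<longlongrightarrow> Hhat s) (at_right s)"
proof -
  have "(Hhat \<longlongrightarrow> Hhat s) (at s within {0..1})"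
    using continuous_on_Hhat assms by (simp add: continuous_on_def)
  then have "(Hhat \<longlongrightarrow> Hhat s) (at s within {s<..<1})"
    by (rule tendsto_within_subset) (use assms in auto)
  moreover have "at_right s = at s within {s<..<1}"
    by (rule at_within_nhd[of _ "{..<1}"]) (use assms in auto)
  ultimately show ?thesis
    by simp
qed

lemma Hhat'_right_continuous:
  assumes "0 \<le> s" "s < 1"
  shows "(Hhat' \<longlongrightarrow> Hhat' s) (at_right s)"
proof (rule order_tendstoI)
  fix a assume a: "Hhat' s < a"
  show "\<forall>\<^sub>F x in at_right s. Hhat' x < a"
    using eventually_at_right_less[of s]
  proof eventually_elim
    case (elim x)
    then have "Hhat' x \<le> Hhat' s"
      using Hhat'_antimono[of s x] assms by simp
    with a show ?case
      by simp
  qed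
next
  fix a assume "a < Hhat' s"
  then obtain \<delta>\<^sub>0 where \<delta>\<^sub>0: "\<delta>\<^sub>0 \<in> {0<..1 - s}" "a < slope s \<delta>\<^sub>0"
    using less_cSup_iff[OF _ bdd_above_slopes[OF assms(1)]] assms by (auto simp: Hhat'_def)
  define y where "y = s + \<delta>\<^sub>0"
  have y: "s < y" "y \<le> 1"
    using \<delta>\<^sub>0 by (auto simp: y_def)
  have "((\<lambda>t. (Hhat y - Hhat t) / (y - t)) \<longlongrightarrow> (Hhat y - Hhat s) / (y - s)) (at_right s)"
    using y Hhat_tendsto_at_right[OF assms] by (intro tendsto_intros) auto
  moreover have "(Hhat y - Hhat s) / (y - s) = slope s \<delta>\<^sub>0"
    by (simp add: slope_def y_def)
  ultimately have "((\<lambda>t. (Hhat y - Hhat t) / (y - t)) \<longlongrightarrow> slope s \<delta>\<^sub>0) (at_right s)"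
    by simp
  then have "\<forall>\<^sub>F t in at_right s. a < (Hhat y - Hhat t) / (y - t)"
    using \<delta>\<^sub>0 by (simp add: order_tendsto_iff)
  then show "\<forall>\<^sub>F t in at_right s. a < Hhat' t"
    using eventually_at_right_real[OF y(1)]
  proof eventually_elim
    case (elim t)
    then show ?case
      using slope_right_le_Hhat'[of t y] y assms by auto
  qed
qed

lemma Hhat'_tendsto_left_1: "\<exists>L. (Hhat' \<longlongrightarrow> L) (at_left 1)"
proof
  define L where "L = Inf (Hhat' ` {0..<1})"
  have bdd: "bdd_below (Hhat' ` {0..<1})"
    by (rule bdd_belowI2[of _ "- K'"]) (rule Hhat'_ge)
  show "(Hhat' \<longlongrightarrow> L) (at_left 1)"
  proof (rule decreasing_tendsto)
    show "\<forall>\<^sub>F x in at_left 1. L \<le> Hhat' x"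
      using eventually_at_left_real[of 0 1]
      by (auto elim!: eventually_mono simp: L_def intro!: cInf_lower bdd)
    fix b assume "L < b"
    then obtain t\<^sub>0 where t\<^sub>0: "t\<^sub>0 \<in> {0..<1}" "Hhat' t\<^sub>0 < b"
      using cInf_less_iff[OF _ bdd] by (auto simp: L_def)
    have t\<^sub>0_lt_1: "t\<^sub>0 < 1"
      using t\<^sub>0 by simp
    show "\<forall>\<^sub>F x in at_left 1. Hhat' x < b"
      using eventually_at_left_real[OF t\<^sub>0_lt_1]
    proof eventually_elim
      case (elim x)
      then have "Hhat' x \<le> Hhat' t\<^sub>0"
        using Hhat'_antimono[of t\<^sub>0 x] t\<^sub>0 by simp
      with t\<^sub>0 show ?case
        by simp
    qed
  qed
qed

lemma rderiv_Hhat_tendsto_left_1: "\<exists>L. (rderiv Hhat \<longlongrightarrow> L) (at_left 1)"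
proof -
  obtain L where L: "(Hhat' \<longlongrightarrow> L) (at_left 1)"
    using Hhat'_tendsto_left_1 by blast
  have "\<forall>\<^sub>F x in at_left 1. Hhat' x = rderiv Hhat x"
    using eventually_at_left_real[of 0 1] by (auto elim!: eventually_mono simp: rderiv_Hhat)
  then show ?thesis
    using Lim_transform_eventually[OF L] by blast
qed


text \<open>If \<open>Hhat\<close> exceeded the chord somewhere, the minimum of the two would be a smaller concave
  majorant of \<open>H\<close>.\<close>
lemma Hhat_affine_if_H_below_chord:
  assumes pr: "0 \<le> p" "p < r" "r \<le> 1"
    and below: "\<And>x. p \<le> x \<Longrightarrow> x \<le> r \<Longrightarrow> H x \<le> Hhat p + (Hhat r - Hhat p) / (r - p) * (x - p)"
    and x: "p \<le> x" "x \<le> r"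
  shows "Hhat x = Hhat p + (Hhat r - Hhat p) / (r - p) * (x - p)"
proof -
  define c where "c = (Hhat r - Hhat p) / (r - p)"
  define L where "L x = Hhat p + c * (x - p)" for x
  have "L = (\<lambda>x. (Hhat p - c * p) + c * x)"
    by (auto simp: L_def algebra_simps)
  then have "concave_on {0..1} (\<lambda>x. min (Hhat x) (L x))"
    using concave_on_min[OF concave_Hhat concave_on_affine] by (simp add: convex_real_interval)
  moreover have "H y \<le> min (Hhat y) (L y)" if "y \<in> {0..1}" for y
  proof (cases "p \<le> y \<and> y \<le> r")
    case True
    then show ?thesis
      using below[of y] H_le_Hhat[OF that] by (simp add: L_def c_def)
  next
    case False
    then have "Hhat y \<le> L y"
      unfolding L_def c_def using concave_on_le_chord[OF concave_Hhat, of p r y] that pr by auto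
    then show ?thesis
      using H_le_Hhat[OF that] by auto
  qed
  ultimately have "Hhat x \<le> L x"
    using concave_envelope_le[of "\<lambda>x. min (Hhat x) (L x)" H x] x pr by auto
  then show ?thesis
    using concave_on_chord_le[OF concave_Hhat, of p r x] x pr by (simp add: L_def c_def)
qed

lemma Hhat'_eq_if_affine:
  assumes "0 \<le> p" "p \<le> t" "t < r" "r \<le> 1"
    and affine: "\<And>x. p \<le> x \<Longrightarrow> x \<le> r \<Longrightarrow> Hhat x = Hhat p + c * (x - p)"
  shows "Hhat' t = c"
proof -
  have "0 < r - t"
    using assms by simp
  then have "\<forall>\<^sub>F \<delta> in at_right 0. \<delta> \<in> {0<..<r - t}"
    by (rule eventually_at_right_real)
  then have "\<forall>\<^sub>F \<delta> in at_right 0. slope t \<delta> = c"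
  proof eventually_elim
    case (elim \<delta>)
    then have "Hhat (t + \<delta>) - Hhat t = c * \<delta>"
      using affine[of t] affine[of "t + \<delta>"] assms(1-4) by (simp add: algebra_simps)
    then show ?case
      using elim by (simp add: slope_def)
  qed
  then have "(slope t \<longlongrightarrow> c) (at_right 0)"
    by (rule tendsto_eventually)
  moreover have "(slope t \<longlongrightarrow> Hhat' t) (at_right 0)"
    using assms by (intro slope_tendsto_Hhat') auto
  ultimately show ?thesis
    by (intro tendsto_unique[of "at_right 0" "slope t"]) auto
qed

text \<open>With \<open>3 e = Hhat a - H a\<close>: near \<open>a\<close>, \<open>H\<close> stays below \<open>Hhat a - 2 e\<close> while \<open>Hhat\<close>, and
  hence every chord of it, stays above \<open>Hhat a - e\<close>.\<close>
lemma H_below_chord_near: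
  assumes a: "0 < a" "a < 1" "H a < Hhat a"
  obtains p r where "0 \<le> p" "p < a" "a < r" "r \<le> 1"
    "\<And>x. p \<le> x \<Longrightarrow> x \<le> r \<Longrightarrow> H x \<le> Hhat p + (Hhat r - Hhat p) / (r - p) * (x - p)"
proof -
  define e where "e = (Hhat a - H a) / 3"
  have e: "0 < e" "H a + e = Hhat a - 2 * e"
    using a by (simp_all add: e_def field_simps)
  have "(H \<longlongrightarrow> H a) (at a within {0..1})" "(Hhat \<longlongrightarrow> Hhat a) (at a within {0..1})"
    using continuous_H continuous_on_Hhat a by (auto simp: continuous_on_def)
  then have "\<forall>\<^sub>F x in at a within {0..1}. H x < H a + e \<and> Hhat a - e < Hhat x"
    using e by (intro eventually_conj order_tendstoD) auto
  then obtain d where d: "0 < d"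
    and near': "\<And>x. x \<in> {0..1} \<Longrightarrow> x \<noteq> a \<Longrightarrow> dist x a < d \<Longrightarrow> H x < H a + e \<and> Hhat a - e < Hhat x"
    unfolding eventually_at by blast
  have near: "H x < H a + e \<and> Hhat a - e < Hhat x" if "x \<in> {0..1}" "dist x a < d" for x
    using near'[OF that(1) _ that(2)] e by (cases "x = a") auto
  define p where "p = max (a - d / 2) (a / 2)"
  define r where "r = min (a + d / 2) ((1 + a) / 2)"
  have pr: "0 \<le> p" "p < a" "a < r" "r \<le> 1"
    using a d by (auto simp: p_def r_def min_def max_def)
  have in_ball: "x \<in> {0..1}" "dist x a < d" if "p \<le> x" "x \<le> r" for x
    using that pr d by (auto simp: dist_real_def p_def r_def)
  have endpoints: "Hhat a - e < Hhat p" "Hhat a - e < Hhat r"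
    using near[OF in_ball[of p]] near[OF in_ball[of r]] pr by auto
  have "H x \<le> Hhat p + (Hhat r - Hhat p) / (r - p) * (x - p)" if "p \<le> x" "x \<le> r" for x
  proof -
    have "H x < min (Hhat p) (Hhat r)"
      using near[OF in_ball[OF that]] endpoints e by auto
    also have "\<dots> \<le> Hhat p + (Hhat r - Hhat p) / (r - p) * (x - p)"
      by (rule min_le_linear_interpolation) (use that pr in auto)
    finally show ?thesis
      by simp
  qed
  with pr show ?thesis
    by (intro that) auto
qed

lemma Hhat'_locally_constant:
  assumes "0 < a" "a < 1" "H a < Hhat a"
  obtains p r where "0 \<le> p" "p < a" "a < r" "r \<le> 1" "\<And>t. p \<le> t \<Longrightarrow> t < r \<Longrightarrow> Hhat' t = Hhat' a"
proof -
  obtain p r where pr: "0 \<le> p" "p < a" "a < r" "r \<le> 1"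
    and below: "\<And>x. p \<le> x \<Longrightarrow> x \<le> r \<Longrightarrow> H x \<le> Hhat p + (Hhat r - Hhat p) / (r - p) * (x - p)"
    using H_below_chord_near[OF assms] by blast
  have "Hhat x = Hhat p + (Hhat r - Hhat p) / (r - p) * (x - p)" if "p \<le> x" "x \<le> r" for x
    using pr by (intro Hhat_affine_if_H_below_chord below that) auto
  then have "Hhat' t = (Hhat r - Hhat p) / (r - p)" if "p \<le> t" "t < r" for t
    by (rule Hhat'_eq_if_affine[OF pr(1) that pr(4)])
  with pr show ?thesis
    by (intro that[OF pr]) auto
qed

lemma borel_measurable_Hhat': "Hhat' \<in> borel_measurable borel"
proof -
  have "mono_on {..<0} (\<lambda>x. - Hhat' x)"
    by (rule mono_onI) (simp add: Hhat'_def)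
  moreover have "mono_on {0..} (\<lambda>x. - Hhat' x)"
    by (rule mono_onI) (simp add: Hhat'_antimono)
  ultimately have "(\<lambda>x. - Hhat' x) \<in> borel_measurable borel"
    by (intro borel_measurable_piecewise_mono[of "{{..<0}, {0..}}"]) auto
  then show ?thesis
    by simp
qed

lemma set_borel_measurable_Hhat': "S \<in> sets borel \<Longrightarrow> set_borel_measurable borel S Hhat'"
  unfolding set_borel_measurable_def
  by (intro borel_measurable_scaleR borel_measurable_indicator borel_measurable_Hhat')

lemma set_integrable_Hhat':
  "A \<in> sets borel \<Longrightarrow> emeasure lborel A < \<infinity> \<Longrightarrow> set_integrable lborel A Hhat'"
  by (rule set_integrable_bounded[OF borel_measurable_Hhat' abs_Hhat'_le])

lemma Hhat_increment_bounds:
  assumes "0 \<le> x" "x \<le> y" "y \<le> 1"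
  shows "Hhat' y * (y - x) \<le> Hhat y - Hhat x" "Hhat y - Hhat x \<le> Hhat' x * (y - x)"
proof -
  have "Hhat' y \<le> (Hhat y - Hhat x) / (y - x)" if "x < y"
  proof (cases "y < 1")
    case True
    then show ?thesis
      using Hhat'_le_slope_left[of x y] that assms by simp
  next
    case False
    then show ?thesis
      using Hhat_slope_ge[of x y] that assms by (simp add: Hhat'_def)
  qed
  moreover have "(Hhat y - Hhat x) / (y - x) \<le> Hhat' x" if "x < y"
    using slope_right_le_Hhat'[of x y] that assms by simp
  ultimately show "Hhat' y * (y - x) \<le> Hhat y - Hhat x" "Hhat y - Hhat x \<le> Hhat' x * (y - x)"
    using assms by (cases "x = y"; simp add: le_divide_eq divide_le_eq)+
qed

lemma integral_Hhat'_bounds: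
  assumes "0 \<le> x" "x \<le> y"
  shows "Hhat' y * (y - x) \<le> (LINT t:{x<..y}|lborel. Hhat' t)"
    "(LINT t:{x<..y}|lborel. Hhat' t) \<le> Hhat' x * (y - x)"
proof -
  have const: "(LINT t:{x<..y}|lborel. c) = c * (y - x)" for c :: real
    using assms by (simp add: set_integral_const)
  have const_integrable: "set_integrable lborel {x<..y} (\<lambda>_. c)" for c :: real
    using assms by (intro set_integrable_bounded[where B = "\<bar>c\<bar>"]) auto
  have integrable: "set_integrable lborel {x<..y} Hhat'"
    using assms by (intro set_integrable_Hhat') auto
  show "Hhat' y * (y - x) \<le> (LINT t:{x<..y}|lborel. Hhat' t)"
    unfolding const[symmetric] using assms
    by (intro set_integral_mono[OF const_integrable integrable] Hhat'_antimono) auto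
  show "(LINT t:{x<..y}|lborel. Hhat' t) \<le> Hhat' x * (y - x)"
    unfolding const[symmetric] using assms
    by (intro set_integral_mono[OF integrable const_integrable] Hhat'_antimono) auto
qed

theorem integral_Hhat':
  assumes "0 \<le> a" "a \<le> b" "b \<le> 1"
  shows "(LINT t:{a<..b}|lborel. Hhat' t) = Hhat b - Hhat a"
proof -
  define \<Psi> where "\<Psi> y = Hhat y - (LINT t:{a<..y}|lborel. Hhat' t)" for y
  have "\<Psi> b = \<Psi> a"
  proof (rule eq_endpoints_if_increments_bounded[where d = Hhat', OF assms(2)])
    fix x y assume xy: "a \<le> x" "x \<le> y" "y \<le> b"
    have "{a<..y} = {a<..x} \<union> {x<..y}"
      using xy by auto
    moreover have "(LINT t:{a<..x} \<union> {x<..y}|lborel. Hhat' t)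
        = (LINT t:{a<..x}|lborel. Hhat' t) + (LINT t:{x<..y}|lborel. Hhat' t)"
      using xy assms by (intro set_integral_Un set_integrable_Hhat') auto
    ultimately have "(LINT t:{a<..y}|lborel. Hhat' t)
        = (LINT t:{a<..x}|lborel. Hhat' t) + (LINT t:{x<..y}|lborel. Hhat' t)"
      by simp
    then have "\<Psi> y - \<Psi> x = (Hhat y - Hhat x) - (LINT t:{x<..y}|lborel. Hhat' t)"
      by (simp add: \<Psi>_def)
    then show "\<bar>\<Psi> y - \<Psi> x\<bar> \<le> (Hhat' x - Hhat' y) * (y - x)"
      unfolding abs_le_iff left_diff_distrib
      using Hhat_increment_bounds[of x y] integral_Hhat'_bounds[of x y] xy assms by linarith
  qed
  moreover have "(LINT t:{a<..a}|lborel. Hhat' t) = 0"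
    unfolding set_lebesgue_integral_def by simp
  ultimately show ?thesis
    unfolding \<Psi>_def by linarith
qed

end

section \<open>The two optimization problems\<close>

lemma quadratic_le_at_positive_part:
  fixes g d :: real
  assumes "0 \<le> g"
  shows "- (1/2) * g\<^sup>2 - g * d
    \<le> - (1/2) * (max 0 (- d))\<^sup>2 - max 0 (- d) * d - (1/2) * (g - max 0 (- d))\<^sup>2"
proof (cases "d \<le> 0")
  case True
  then show ?thesis
    by (simp add: power2_eq_square algebra_simps)
next
  case False
  then show ?thesis
    using assms by (simp add: power2_eq_square)
qed

locale regular_density =
  fixes h :: "real \<Rightarrow> real" and K A :: real
  assumes borel_measurable_h: "h \<in> borel_measurable borel"
    and integrable_h: "set_integrable lborel {0..1} h"
    and h_le: "\<And>t. 0 < t \<Longrightarrow> t < 1 \<Longrightarrow> h t \<le> K"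
    and abs_h_le_near_1: "\<And>t. 1/2 \<le> t \<Longrightarrow> t < 1 \<Longrightarrow> \<bar>h t\<bar> \<le> A"
begin

definition H :: "real \<Rightarrow> real" where
  "H s = (LINT t:{0..s}|lborel. h t)"

definition norm_h :: real where
  "norm_h = (LINT t:{0..1}|lborel. \<bar>h t\<bar>)"

lemma integrable_h_on: "S \<in> sets borel \<Longrightarrow> S \<subseteq> {0..1} \<Longrightarrow> set_integrable lborel S h"
  by (rule set_integrable_subset[OF integrable_h]) auto

lemma H_eq_interval_integral: "0 \<le> s \<Longrightarrow> H s = (LBINT t=ereal 0..ereal s. h t)"
  unfolding H_def by (rule interval_integral_Icc[symmetric])

lemma H_diff:
  assumes "0 \<le> x" "x \<le> y" "y \<le> 1"
  shows "H y - H x = (LINT t:{x<..<y}|lborel. h t)"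
proof -
  have "interval_lebesgue_integrable lborel (ereal 0) (ereal y) h"
    using assms by (auto simp: interval_lebesgue_integrable_def intro: integrable_h_on)
  then have "(LBINT t=ereal 0..ereal x. h t) + (LBINT t=ereal x..ereal y. h t) = (LBINT t=ereal 0..ereal y. h t)"
    using assms by (intro interval_integral_sum) (simp add: min_def max_def)
  moreover have "(LBINT t=ereal x..ereal y. h t) = (LINT t:{x<..<y}|lborel. h t)"
    using assms(2) by (simp add: interval_integral_Ioo)
  ultimately show ?thesis
    using assms by (simp add: H_eq_interval_integral)
qed

lemma H_0: "H 0 = 0"
  using interval_integral_Icc[of 0 0 h] by (simp add: H_def)

lemma norm_h_nonneg: "0 \<le> norm_h"
  unfolding norm_h_def by (rule set_integral_nonneg) simp

lemma abs_H_le: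
  assumes "0 \<le> x" "x \<le> 1"
  shows "\<bar>H x\<bar> \<le> norm_h"
proof -
  have "\<bar>H x\<bar> \<le> (LINT t:{0..x}|lborel. \<bar>h t\<bar>)"
    unfolding H_def using set_integral_norm_bound[OF integrable_h_on] assms by fastforce
  also have "\<dots> \<le> (LINT t:{0..x}|lborel. \<bar>h t\<bar>) + (LINT t:{x<..1}|lborel. \<bar>h t\<bar>)"
    by (simp add: set_integral_nonneg)
  also have "\<dots> = (LINT t:{0..x} \<union> {x<..1}|lborel. \<bar>h t\<bar>)"
    by (intro set_integral_Un[symmetric] set_integrable_abs integrable_h_on) (use assms in auto)
  also have "{0..x} \<union> {x<..1} = {0..1}"
    using assms by auto
  finally show ?thesis
    by (simp add: norm_h_def)
qed

lemma continuous_on_H: "continuous_on {0..1} H"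
proof -
  have "h integrable_on {0..1}"
    by (rule set_borel_integral_eq_integral(1)[OF integrable_h])
  then have "continuous_on {0..1} (\<lambda>x. integral {0..x} h)"
    by (rule indefinite_integral_continuous_1)
  moreover have "H x = integral {0..x} h" if "x \<in> {0..1}" for x
    unfolding H_def using that by (intro set_borel_integral_eq_integral(2) integrable_h_on) auto
  ultimately show ?thesis
    using continuous_on_cong[of "{0..1}" "{0..1}" H "\<lambda>x. integral {0..x} h"] by blast
qed

lemma H_le_left:
  assumes "x \<in> {0..1}"
  shows "H x \<le> max K 0 * x"
proof -
  have "H x = (LINT t:{0<..<x}|lborel. h t)"
    using H_diff[of 0 x] H_0 assms by simp
  also have "\<dots> \<le> (LINT t:{0<..<x}|lborel. max K 0)"
    using assms h_le
    by (intro set_integral_mono integrable_h_on set_integrable_bounded[where B = "max K 0"]) force+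
  also have "\<dots> = max K 0 * x"
    using assms by (simp add: set_integral_const)
  finally show ?thesis .
qed

lemma H_le_right:
  assumes x: "x \<in> {0..1}"
  shows "H x \<le> H 1 + max A (4 * norm_h) * (1 - x)"
proof (cases "1/2 \<le> x")
  case True
  have "- A * (1 - x) = (LINT t:{x<..<1}|lborel. - A)"
    using x by (simp add: set_integral_const)
  also have "\<dots> \<le> (LINT t:{x<..<1}|lborel. h t)"
  proof (rule set_integral_mono)
    show "set_integrable lborel {x<..<1} (\<lambda>t. - A)"
      using x by (intro set_integrable_bounded[where B = "\<bar>A\<bar>"]) auto
    show "set_integrable lborel {x<..<1} h"
      using x by (intro integrable_h_on) auto
    show "- A \<le> h t" if "t \<in> {x<..<1}" for t
      using abs_h_le_near_1[of t] True that by auto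
  qed
  also have "\<dots> = H 1 - H x"
    using H_diff[of x 1] x by simp
  finally have "- A * (1 - x) \<le> H 1 - H x" .
  moreover have "A * (1 - x) \<le> max A (4 * norm_h) * (1 - x)"
    using x by (intro mult_right_mono) auto
  ultimately show ?thesis
    by simp
next
  case False
  have "4 * norm_h * (1 / 2) \<le> max A (4 * norm_h) * (1 - x)"
    using False norm_h_nonneg by (intro mult_mono) auto
  then show ?thesis
    using abs_H_le[of x] abs_H_le[of 1] x by (simp add: abs_le_iff)
qed

sublocale wedge_bounded H "max K 0" "max A (4 * norm_h)"
  using continuous_on_H H_0 norm_h_nonneg H_le_left H_le_right
  by unfold_locales auto

definition Gstar :: "real \<Rightarrow> real" where
  "Gstar s = max 0 (- rderiv Hhat s)"

lemma Gstar_eq: "s \<in> {0..<1} \<Longrightarrow> Gstar s = max 0 (- Hhat' s)"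
  by (simp add: Gstar_def rderiv_Hhat)

lemma Gstar_nonneg: "0 \<le> Gstar s"
  by (simp add: Gstar_def)

lemma bounded_Gstar: "\<exists>C. \<forall>s\<in>{0..<1}. \<bar>Gstar s\<bar> \<le> C"
  using abs_Hhat'_le norm_h_nonneg
  by (auto simp: Gstar_eq abs_le_iff intro!: exI[of _ "max K 0 + max A (4 * norm_h)"])

lemma mono_on_Gstar: "mono_on {0..<1} Gstar"
  by (rule mono_onI) (auto simp: Gstar_eq max_def dest: Hhat'_antimono[rotated])

lemma Gstar_right_continuous:
  assumes "s \<in> {0..<1}"
  shows "continuous (at_right s) Gstar"
proof -
  have "((\<lambda>x. max 0 (- Hhat' x)) \<longlongrightarrow> max 0 (- Hhat' s)) (at_right s)"
    using Hhat'_right_continuous assms by (intro tendsto_intros) auto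
  moreover have "\<forall>\<^sub>F x in at_right s. max 0 (- Hhat' x) = Gstar x"
    using eventually_at_right_real[of s 1] assms by (auto elim!: eventually_mono simp: Gstar_eq)
  ultimately have "(Gstar \<longlongrightarrow> Gstar s) (at_right s)"
    using Lim_transform_eventually Gstar_eq[OF assms] by fastforce
  then show ?thesis
    by (simp add: continuous_within)
qed

lemma Gstar_Qclass: "Gstar \<in> Qclass"
  using bounded_Gstar mono_on_Gstar Gstar_right_continuous by (auto intro: Qclass_if_bounded)

lemma set_integrable_mult_h:
  assumes G: "G \<in> Qclass" "\<And>s. s \<in> {0..<1} \<Longrightarrow> 0 \<le> G s"
  shows "set_integrable lborel {0..<1} (\<lambda>s. G s * h s)"
proof -
  have "set_integrable lborel {0..<1/2} (\<lambda>s. G s * h s)"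
  proof (rule set_integrable_bounded_mult)
    show "set_borel_measurable borel {0..<1/2} G"
      using G(1) by (rule Qclass_set_borel_measurable) auto
    show "\<bar>G s\<bar> \<le> G (1/2)" if "s \<in> {0..<1/2}" for s
    proof -
      have "G s \<le> G (1/2)"
        using G(1) that by (intro mono_onD[of "{0..<1}" G]) (auto simp: Qclass_def)
      then show ?thesis
        using G(2)[of s] that by simp
    qed
    show "set_integrable lborel {0..<1/2} h"
      by (rule integrable_h_on) auto
  qed
  moreover have "set_integrable lborel {1/2..<1} (\<lambda>s. G s * h s)"
  proof (rule set_integrable_mult_bounded)
    show "set_borel_measurable borel {1/2..<1} G"
      using G(1) by (rule Qclass_set_borel_measurable) auto
    show "set_integrable lborel {1/2..<1} (\<lambda>s. (G s)\<^sup>2)"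
      by (rule set_integrable_subset[of _ "{0..<1}"]) (use G(1) in \<open>auto simp: Qclass_def\<close>)
    show "set_borel_measurable borel {1/2..<1} h"
      unfolding set_borel_measurable_def using borel_measurable_h by measurable
    show "\<bar>h s\<bar> \<le> A" if "s \<in> {1/2..<1}" for s
      using abs_h_le_near_1 that by simp
    show "emeasure lborel {1/2..<1::real} < \<infinity>"
      by (rule emeasure_bounded_finite) (rule bounded_subset[OF compact_imp_bounded[OF compact_Icc[of 0 1]]], auto)
  qed auto
  ultimately have "set_integrable lborel ({0..<1/2} \<union> {1/2..<1}) (\<lambda>s. G s * h s)"
    by (rule set_integrable_Un) auto
  moreover have "{0..<1/2} \<union> {1/2..<1} = {0..<1::real}"
    by auto
  ultimately show ?thesis
    by simp
qed

lemma set_integrable_mult_Hhat':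
  assumes "G \<in> Qclass"
  shows "set_integrable lborel {0..<1} (\<lambda>s. G s * Hhat' s)"
  using assms abs_Hhat'_le
  by (intro set_integrable_mult_bounded set_borel_measurable_Hhat')
    (auto simp: Qclass_def intro: Qclass_set_borel_measurable)

lemma integral_superlevel_set:
  fixes G :: "real \<Rightarrow> real"
  assumes mono: "mono_on {0..<1} G" and nonempty: "{s\<in>{0..<1}. u < G s} \<noteq> {}"
  defines "S \<equiv> {s\<in>{0..<1}. u < G s}"
  shows "(LINT t:S|lborel. h t - Hhat' t) = Hhat (Inf S) - H (Inf S)"
proof -
  define a where "a = Inf S"
  note S = mono_on_superlevel_set[OF mono nonempty, folded S_def a_def]
  have "(LINT t:S|lborel. h t - Hhat' t) = (LINT t:{a<..<1}|lborel. h t - Hhat' t)"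
    by (rule set_integral_discrete_difference[where X = "{a}"]) (use S in auto)
  also have "\<dots> = (LINT t:{a<..<1}|lborel. h t) - (LINT t:{a<..<1}|lborel. Hhat' t)"
    using S by (intro set_integral_diff(2) integrable_h_on set_integrable_Hhat') auto
  also have "(LINT t:{a<..<1}|lborel. h t) = H 1 - H a"
    using H_diff[of a 1] S by simp
  also have "(LINT t:{a<..<1}|lborel. Hhat' t) = (LINT t:{a<..1}|lborel. Hhat' t)"
    by (rule set_integral_discrete_difference[where X = "{1}"]) auto
  also have "\<dots> = Hhat 1 - Hhat a"
    using S by (intro integral_Hhat') auto
  finally show ?thesis
    by (simp add: Hhat_1 a_def)
qed

text \<open>At the left end \<open>a\<close> of a superlevel set of \<open>Gstar\<close> the envelope touches \<open>H\<close>: otherwise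
  \<open>Hhat'\<close> would be constant around \<open>a\<close>, so the superlevel set would start either before \<open>a\<close>
  or after it.\<close>
lemma Hhat_eq_H_at_superlevel_set:
  assumes "0 \<le> u" and nonempty: "{s\<in>{0..<1}. u < Gstar s} \<noteq> {}"
  defines "S \<equiv> {s\<in>{0..<1}. u < Gstar s}"
  shows "Hhat (Inf S) = H (Inf S)"
proof -
  define a where "a = Inf S"
  note S = mono_on_superlevel_set[OF mono_on_Gstar nonempty, folded S_def a_def]
  have bdd: "bdd_below S"
    by (rule bdd_belowI[of _ 0]) (simp add: S_def)
  have S_iff: "t \<in> S \<longleftrightarrow> t \<in> {0..<1} \<and> u < - Hhat' t" for t
    using assms(1) by (auto simp: S_def Gstar_eq)
  show ?thesis
    unfolding a_def[symmetric]
  proof (rule ccontr)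
    assume "Hhat a \<noteq> H a"
    moreover have "a \<noteq> 0"
      using Hhat_0 H_0 \<open>Hhat a \<noteq> H a\<close> by auto
    ultimately have a: "0 < a" "a < 1" "H a < Hhat a"
      using S(1) H_le_Hhat[of a] by auto
    obtain p r where pr: "0 \<le> p" "p < a" "a < r" "r \<le> 1"
      and const: "\<And>t. p \<le> t \<Longrightarrow> t < r \<Longrightarrow> Hhat' t = Hhat' a"
      using Hhat'_locally_constant[OF a] by blast
    show False
    proof (cases "u < - Hhat' a")
      case True
      then have "(p + a) / 2 \<in> S"
        using S_iff[of "(p + a) / 2"] const[of "(p + a) / 2"] pr a by auto
      then have "a \<le> (p + a) / 2"
        unfolding a_def by (rule cInf_lower[OF _ bdd])
      then show False
        using pr by simp
    next
      case False
      obtain t where t: "t \<in> S" "t < r"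
        using cInf_less_iff[OF nonempty[folded S_def] bdd, of r] pr by (auto simp: a_def)
      then have "Hhat' t = Hhat' a"
        using S(3) pr by (intro const) (auto simp: a_def)
      then show False
        using t(1) S_iff[of t] False by simp
    qed
  qed
qed

lemma set_integrable_mult_h_minus_Hhat':
  assumes "G \<in> Qclass" "\<And>s. s \<in> {0..<1} \<Longrightarrow> 0 \<le> G s"
  shows "set_integrable lborel {0..<1} (\<lambda>s. G s * (h s - Hhat' s))"
  using set_integral_diff(1)[OF set_integrable_mult_h[OF assms] set_integrable_mult_Hhat'[OF assms(1)]]
  by (simp add: right_diff_distrib)

lemma layer_cake_h_minus_Hhat':
  assumes G: "G \<in> Qclass" "\<And>s. s \<in> {0..<1} \<Longrightarrow> 0 \<le> G s"
  shows "(LINT s:{0..<1}|lborel. G s * (h s - Hhat' s))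
    = (LINT u:{0..}|lborel. (LINT s:{s\<in>{0..<1}. u < G s}|lborel. h s - Hhat' s))"
proof (rule layer_cake)
  show "(\<lambda>s. h s - Hhat' s) \<in> borel_measurable borel"
    using borel_measurable_h borel_measurable_Hhat' by measurable
qed (use G in \<open>auto intro: Qclass_set_borel_measurable set_integrable_mult_h_minus_Hhat'\<close>)

lemma integral_mult_h_minus_Hhat'_nonneg:
  assumes G: "G \<in> Qclass" "\<And>s. s \<in> {0..<1} \<Longrightarrow> 0 \<le> G s"
  shows "0 \<le> (LINT s:{0..<1}|lborel. G s * (h s - Hhat' s))"
proof -
  have mono: "mono_on {0..<1} G"
    using G by (simp add: Qclass_def)
  have "0 \<le> (LINT s:{s\<in>{0..<1}. u < G s}|lborel. h s - Hhat' s)" for u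
  proof (cases "{s\<in>{0..<1}. u < G s} = {}")
    case True
    then show ?thesis
      by (simp add: set_lebesgue_integral_def)
  next
    case False
    then show ?thesis
      using integral_superlevel_set[OF mono False] mono_on_superlevel_set(1)[OF mono False] H_le_Hhat
      by auto
  qed
  then have "0 \<le> (LINT u:{0..}|lborel. (LINT s:{s\<in>{0..<1}. u < G s}|lborel. h s - Hhat' s))"
    by (simp add: set_integral_nonneg)
  also have "\<dots> = (LINT s:{0..<1}|lborel. G s * (h s - Hhat' s))"
    by (rule layer_cake_h_minus_Hhat'[OF G, symmetric])
  finally show ?thesis .
qed

lemma integral_mult_Gstar_h_minus_Hhat': "(LINT s:{0..<1}|lborel. Gstar s * (h s - Hhat' s)) = 0"
proof -
  have "(LINT s:{s\<in>{0..<1}. u < Gstar s}|lborel. h s - Hhat' s) = 0" if "u \<in> {0..}" for u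
  proof (cases "{s\<in>{0..<1}. u < Gstar s} = {}")
    case True
    then show ?thesis
      by (simp add: set_lebesgue_integral_def)
  next
    case False
    then show ?thesis
      using integral_superlevel_set[OF mono_on_Gstar False] Hhat_eq_H_at_superlevel_set[OF _ False] that
      by simp
  qed
  then have "(LINT u:{0..}|lborel. (LINT s:{s\<in>{0..<1}. u < Gstar s}|lborel. h s - Hhat' s))
      = (LINT u:{0::real..}|lborel. 0)"
    by (intro set_lebesgue_integral_cong) auto
  then show ?thesis
    using layer_cake_h_minus_Hhat'[OF Gstar_Qclass Gstar_nonneg] by simp
qed

lemma objective_rderiv_Hhat: "objective (rderiv Hhat) G = objective Hhat' G"
  unfolding objective_def
  by (intro arg_cong2[where f = "(-)"] refl set_lebesgue_integral_cong) (auto simp: rderiv_Hhat)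

lemma objective_h:
  assumes G: "G \<in> Qclass" "\<And>s. s \<in> {0..<1} \<Longrightarrow> 0 \<le> G s"
  shows "objective h G = objective (rderiv Hhat) G - (LINT s:{0..<1}|lborel. G s * (h s - Hhat' s))"
proof -
  have "(LINT s:{0..<1}|lborel. G s * (h s - Hhat' s))
      = (LINT s:{0..<1}|lborel. G s * h s) - (LINT s:{0..<1}|lborel. G s * Hhat' s)"
    using set_integral_diff(2)[OF set_integrable_mult_h[OF G] set_integrable_mult_Hhat'[OF G(1)]]
    by (simp add: right_diff_distrib)
  then have "objective h G = objective Hhat' G - (LINT s:{0..<1}|lborel. G s * (h s - Hhat' s))"
    unfolding objective_def by simp
  then show ?thesis
    by (simp only: objective_rderiv_Hhat)
qed

lemma set_integrable_sq_diff_Gstar: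
  assumes "G \<in> Qclass"
  shows "set_integrable lborel {0..<1} (\<lambda>s. (G s - Gstar s)\<^sup>2)"
proof -
  have "set_integrable lborel {0..<1} (\<lambda>s. G s * Gstar s)"
  proof (rule set_integrable_mult_bounded)
    show "set_borel_measurable borel {0..<1} Gstar"
      by (rule set_borel_measurable_mono_on[OF mono_on_Gstar]) simp
    show "\<bar>Gstar s\<bar> \<le> max K 0 + max A (4 * norm_h)" if "s \<in> {0..<1}" for s
      using abs_Hhat'_le[of s] that by (auto simp: Gstar_eq)
  qed (use assms in \<open>auto simp: Qclass_def intro: Qclass_set_borel_measurable\<close>)
  then have "set_integrable lborel {0..<1} (\<lambda>s. (G s)\<^sup>2 + (Gstar s)\<^sup>2 - 2 * (G s * Gstar s))"
    using assms Gstar_Qclass by (intro set_integral_add(1) set_integral_diff(1) set_integrable_mult_right)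
      (auto simp: Qclass_def)
  then show ?thesis
    by (simp add: power2_diff mult.assoc)
qed

lemma set_integrable_objective_integrand:
  assumes "G \<in> Qclass"
  shows "set_integrable lborel {0..<1} (\<lambda>s. - (1/2) * (G s)\<^sup>2 - G s * Hhat' s)"
  using assms set_integrable_mult_Hhat'[OF assms]
  by (intro set_integral_diff(1) set_integrable_mult_right) (auto simp: Qclass_def)

lemma objective_eq_integral:
  assumes "G \<in> Qclass"
  shows "objective Hhat' G = (LINT s:{0..<1}|lborel. - (1/2) * (G s)\<^sup>2 - G s * Hhat' s)"
proof -
  have "set_integrable lborel {0..<1} (\<lambda>s. - (1/2) * (G s)\<^sup>2)"
    using assms by (intro set_integrable_mult_right) (auto simp: Qclass_def)
  from set_integral_diff(2)[OF this set_integrable_mult_Hhat'[OF assms]] show ?thesis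
    by (simp add: objective_def)
qed

lemma objective_le_Gstar:
  assumes G: "G \<in> Qclass" "\<And>s. s \<in> {0..<1} \<Longrightarrow> 0 \<le> G s"
  shows "objective (rderiv Hhat) G + (1/2) * (LINT s:{0..<1}|lborel. (G s - Gstar s)\<^sup>2)
    \<le> objective (rderiv Hhat) Gstar"
proof -
  have "objective Hhat' G
      \<le> (LINT s:{0..<1}|lborel. (- (1/2) * (Gstar s)\<^sup>2 - Gstar s * Hhat' s) - (1/2) * (G s - Gstar s)\<^sup>2)"
    unfolding objective_eq_integral[OF G(1)]
  proof (rule set_integral_mono)
    show "set_integrable lborel {0..<1}
        (\<lambda>s. (- (1/2) * (Gstar s)\<^sup>2 - Gstar s * Hhat' s) - (1/2) * (G s - Gstar s)\<^sup>2)"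
      using set_integrable_objective_integrand[OF Gstar_Qclass] set_integrable_sq_diff_Gstar[OF G(1)]
      by (intro set_integral_diff(1)[where f = "\<lambda>s. - (1/2) * (Gstar s)\<^sup>2 - Gstar s * Hhat' s"]) auto
    show "- (1/2) * (G s)\<^sup>2 - G s * Hhat' s
        \<le> (- (1/2) * (Gstar s)\<^sup>2 - Gstar s * Hhat' s) - (1/2) * (G s - Gstar s)\<^sup>2"
      if "s \<in> {0..<1}" for s
      using quadratic_le_at_positive_part[OF G(2)[OF that], of "Hhat' s"] that by (simp add: Gstar_eq)
  qed (rule set_integrable_objective_integrand[OF G(1)])
  also have "\<dots> = objective Hhat' Gstar - (1/2) * (LINT s:{0..<1}|lborel. (G s - Gstar s)\<^sup>2)"
    unfolding objective_eq_integral[OF Gstar_Qclass]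
    using set_integrable_objective_integrand[OF Gstar_Qclass] set_integrable_sq_diff_Gstar[OF G(1)]
      set_integrable_mult_Hhat'[OF Gstar_Qclass] Gstar_Qclass
    by (simp add: set_integral_diff(2) Qclass_def)
  finally show ?thesis
    by (simp add: objective_rderiv_Hhat)
qed

lemma objective_h_Gstar: "objective h Gstar = objective (rderiv Hhat) Gstar"
  using objective_h[OF Gstar_Qclass Gstar_nonneg] integral_mult_Gstar_h_minus_Hhat' by simp

lemma Gstar_maximizes:
  assumes G: "G \<in> Qclass" "\<forall>s\<in>{0..<1}. 0 \<le> G s"
  shows "objective (rderiv Hhat) G \<le> objective (rderiv Hhat) Gstar"
    and "objective (rderiv Hhat) G = objective (rderiv Hhat) Gstar \<Longrightarrow> \<forall>s\<in>{0..<1}. G s = Gstar s"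
    and "objective h G \<le> objective h Gstar"
    and "objective h G = objective h Gstar \<Longrightarrow> \<forall>s\<in>{0..<1}. G s = Gstar s"
proof -
  define d where "d = (LINT s:{0..<1}|lborel. (G s - Gstar s)\<^sup>2)"
  have "0 \<le> d"
    unfolding d_def by (rule set_integral_nonneg) simp
  have le: "objective (rderiv Hhat) G + (1/2) * d \<le> objective (rderiv Hhat) Gstar"
    unfolding d_def using G by (intro objective_le_Gstar) auto
  have "objective h G = objective (rderiv Hhat) G - (LINT s:{0..<1}|lborel. G s * (h s - Hhat' s))"
    using G by (intro objective_h) auto
  moreover have "0 \<le> (LINT s:{0..<1}|lborel. G s * (h s - Hhat' s))"
    using G by (intro integral_mult_h_minus_Hhat'_nonneg) auto
  ultimately have h_le: "objective h G \<le> objective (rderiv Hhat) G"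
    by linarith
  have unique: "\<forall>s\<in>{0..<1}. G s = Gstar s" if "d \<le> 0"
  proof
    fix s :: real assume "s \<in> {0..<1}"
    have "d = 0"
      using that \<open>0 \<le> d\<close> by simp
    then show "G s = Gstar s"
      using G(1) \<open>s \<in> {0..<1}\<close> unfolding d_def Qclass_def
      by (intro eq_if_right_continuous_sq_integral_zero[OF _ Gstar_right_continuous
            set_integrable_sq_diff_Gstar[OF G(1)]]) auto
  qed
  show "objective (rderiv Hhat) G \<le> objective (rderiv Hhat) Gstar"
    "objective h G \<le> objective h Gstar"
    using le h_le objective_h_Gstar \<open>0 \<le> d\<close> by linarith+
  show "objective (rderiv Hhat) G = objective (rderiv Hhat) Gstar \<Longrightarrow> \<forall>s\<in>{0..<1}. G s = Gstar s"
    using le by (intro unique) linarith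
  show "objective h G = objective h Gstar \<Longrightarrow> \<forall>s\<in>{0..<1}. G s = Gstar s"
    using le h_le objective_h_Gstar by (intro unique) linarith
qed

theorem Gstar_unique_maximizer:
  "\<forall>G\<in>Qclass. (\<forall>s\<in>{0..<1}. G s \<ge> 0) \<longrightarrow> objective h G \<le> objective h Gstar"
  "\<forall>G\<in>Qclass. (\<forall>s\<in>{0..<1}. G s \<ge> 0) \<longrightarrow>
    objective h G = objective h Gstar \<longrightarrow> (\<forall>s\<in>{0..<1}. G s = Gstar s)"
  "\<forall>G\<in>Qclass. (\<forall>s\<in>{0..<1}. G s \<ge> 0) \<longrightarrow> objective (rderiv Hhat) G \<le> objective (rderiv Hhat) Gstar"
  "\<forall>G\<in>Qclass. (\<forall>s\<in>{0..<1}. G s \<ge> 0) \<longrightarrow>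
    objective (rderiv Hhat) G = objective (rderiv Hhat) Gstar \<longrightarrow> (\<forall>s\<in>{0..<1}. G s = Gstar s)"
  using Gstar_maximizes by blast+

end

section \<open>Quantiles and the density of \<open>H\<close>\<close>

abbreviation cdf_of :: "'a measure \<Rightarrow> ('a \<Rightarrow> real) \<Rightarrow> real \<Rightarrow> real" where
  "cdf_of M X x \<equiv> measure M {\<omega>\<in>space M. X \<omega> \<le> x}"

lemma quantile_bounds:
  assumes "s < cdf_of M X hi" "\<And>x. s < cdf_of M X x \<Longrightarrow> lo \<le> x"
  shows "lo \<le> quantile M X s" "quantile M X s \<le> hi"
proof -
  have "hi \<in> {x. s < cdf_of M X x}"
    using assms(1) by simp
  moreover have "bdd_below {x. s < cdf_of M X x}"
    using assms(2) by (auto intro!: bdd_belowI[of _ lo])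
  ultimately show "lo \<le> quantile M X s" "quantile M X s \<le> hi"
    unfolding quantile_def using assms(2) by (auto intro: cInf_greatest cInf_lower)
qed

lemma borel_measurable_quantile:
  assumes "prob_space M"
    and bounds: "\<And>s. 0 \<le> s \<Longrightarrow> s < 1 \<Longrightarrow> \<exists>lo hi. s < cdf_of M X hi \<and> (\<forall>x. s < cdf_of M X x \<longrightarrow> lo \<le> x)"
  shows "quantile M X \<in> borel_measurable borel"
proof -
  have "{x. s < cdf_of M X x} = UNIV" if "s < 0" for s
    using that by (auto intro: less_le_trans[OF _ measure_nonneg])
  then have "mono_on {..<0} (quantile M X)"
    by (intro mono_onI) (simp add: quantile_def)
  moreover have "{x. s < cdf_of M X x} = {}" if "1 \<le> s" for s
    using that prob_space.prob_le_1[OF assms(1)] by (auto simp: not_less intro: order.trans)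
  then have "mono_on {1..} (quantile M X)"
    by (intro mono_onI) (simp add: quantile_def)
  moreover have "mono_on {0..<1} (quantile M X)"
  proof (rule mono_onI)
    fix r s :: real assume "r \<in> {0..<1}" "s \<in> {0..<1}" "r \<le> s"
    moreover obtain lo hi where "r < cdf_of M X hi" "\<forall>x. r < cdf_of M X x \<longrightarrow> lo \<le> x"
      using bounds \<open>r \<in> {0..<1}\<close> by fastforce
    moreover obtain lo' hi' where "s < cdf_of M X hi'"
      using bounds \<open>s \<in> {0..<1}\<close> by fastforce
    ultimately show "quantile M X r \<le> quantile M X s"
      unfolding quantile_def by (intro cInf_superset_mono) (auto intro: bdd_belowI)
  qed
  ultimately show ?thesis
    by (intro borel_measurable_piecewise_mono[of "{{..<0}, {0..<1}, {1..}}"]) auto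
qed

lemma le_if_cdf_gt:
  assumes "prob_space M" "X \<in> borel_measurable M" "AE \<omega> in M. c \<le> X \<omega>" "0 \<le> s" "s < cdf_of M X x"
  shows "c \<le> x"
proof (rule ccontr)
  assume "\<not> c \<le> x"
  moreover have "{\<omega>\<in>space M. X \<omega> \<le> x} \<in> sets M"
    using assms(2) by measurable
  ultimately have "cdf_of M X x = 0"
    using assms(3) by (subst prob_space.prob_Collect_eq_0[OF assms(1)]) (auto elim!: eventually_mono)
  with assms(4,5) show False
    by simp
qed

lemma cdf_eq_1_if_AE_le:
  assumes "prob_space M" "X \<in> borel_measurable M" "AE \<omega> in M. X \<omega> \<le> c"
  shows "cdf_of M X c = 1"
proof -
  have "{\<omega>\<in>space M. X \<omega> \<le> c} \<in> sets M"
    using assms(2) by measurable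
  then show ?thesis
    using assms(3) by (subst prob_space.prob_Collect_eq_1[OF assms(1)]) (auto elim!: eventually_mono)
qed

text \<open>Markov's inequality for \<open>X\<^sup>2\<close>.\<close>
lemma cdf_gt_if_square_integrable:
  assumes "prob_space M" "X \<in> borel_measurable M" "integrable M (\<lambda>\<omega>. (X \<omega>)\<^sup>2)" "s < 1"
  defines "E \<equiv> integral\<^sup>L M (\<lambda>\<omega>. (X \<omega>)\<^sup>2)"
  shows "s < cdf_of M X (sqrt (E / (1 - s)) + 1)"
proof -
  define x\<^sub>0 where "x\<^sub>0 = sqrt (E / (1 - s)) + 1"
  have E: "0 \<le> E / (1 - s)"
    using assms(4) by (simp add: E_def)
  then have x\<^sub>0: "0 < x\<^sub>0"
    by (simp add: x\<^sub>0_def add_nonneg_pos)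
  have "{\<omega>\<in>space M. X \<omega> \<le> x\<^sub>0} \<in> sets M"
    using assms(2) by measurable
  then have "1 - cdf_of M X x\<^sub>0 = measure M (space M - {\<omega>\<in>space M. X \<omega> \<le> x\<^sub>0})"
    by (rule prob_space.prob_compl[OF assms(1), symmetric])
  also have "\<dots> = measure M {\<omega>\<in>space M. \<not> X \<omega> \<le> x\<^sub>0}"
    by (rule arg_cong[where f = "measure M"]) auto
  also have "\<dots> \<le> measure M {\<omega>\<in>space M. x\<^sub>0\<^sup>2 \<le> (X \<omega>)\<^sup>2}"
  proof (rule finite_measure.finite_measure_mono)
    show "finite_measure M"
      using assms(1) by (simp add: prob_space_def)
    show "{\<omega>\<in>space M. \<not> X \<omega> \<le> x\<^sub>0} \<subseteq> {\<omega>\<in>space M. x\<^sub>0\<^sup>2 \<le> (X \<omega>)\<^sup>2}"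
      using x\<^sub>0 by (auto intro!: power_mono)
    show "{\<omega>\<in>space M. x\<^sub>0\<^sup>2 \<le> (X \<omega>)\<^sup>2} \<in> sets M"
      using assms(2) by measurable
  qed
  also have "\<dots> \<le> E / x\<^sub>0\<^sup>2"
    unfolding E_def
    by (rule integral_Markov_inequality_measure[OF assms(3), where A = "space M"]) (use x\<^sub>0 in auto)
  also have "\<dots> < 1 - s"
  proof -
    have "(sqrt (E / (1 - s)))\<^sup>2 < x\<^sub>0\<^sup>2"
      using E by (intro power_strict_mono) (auto simp: x\<^sub>0_def)
    then have "E / (1 - s) < x\<^sub>0\<^sup>2"
      using E by simp
    then show ?thesis
      using assms(4) x\<^sub>0 by (simp add: divide_less_eq mult.commute)
  qed
  finally show ?thesis
    by (simp add: x\<^sub>0_def)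
qed

lemma quantile_of_bounded:
  assumes "prob_space M" "X \<in> borel_measurable M" "AE \<omega> in M. \<bar>X \<omega>\<bar> \<le> C"
  shows "quantile M X \<in> borel_measurable borel" "\<And>s. 0 \<le> s \<Longrightarrow> s < 1 \<Longrightarrow> \<bar>quantile M X s\<bar> \<le> C"
proof -
  have le: "AE \<omega> in M. X \<omega> \<le> C" and ge: "AE \<omega> in M. - C \<le> X \<omega>"
    using assms(3) by (auto elim!: eventually_mono)
  have upper: "s < cdf_of M X C" if "s < 1" for s
    using cdf_eq_1_if_AE_le[OF assms(1,2) le] that by simp
  have lower: "- C \<le> x" if "0 \<le> s" "s < cdf_of M X x" for s x
    using le_if_cdf_gt[OF assms(1,2) ge that] .
  show "quantile M X \<in> borel_measurable borel"
    using upper lower by (intro borel_measurable_quantile[OF assms(1)]) blast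
  show "\<bar>quantile M X s\<bar> \<le> C" if "0 \<le> s" "s < 1" for s
    using quantile_bounds[of s M X C "- C"] upper lower that by (auto simp: abs_le_iff)
qed

lemma quantile_of_nonneg_square_integrable:
  assumes "prob_space M" "X \<in> borel_measurable M" "integrable M (\<lambda>\<omega>. (X \<omega>)\<^sup>2)"
    and "AE \<omega> in M. 0 \<le> X \<omega>"
  defines "E \<equiv> integral\<^sup>L M (\<lambda>\<omega>. (X \<omega>)\<^sup>2)"
  shows "quantile M X \<in> borel_measurable borel"
    and "\<And>s. 0 \<le> s \<Longrightarrow> s < 1 \<Longrightarrow> 0 \<le> quantile M X s"
    and "\<And>s. 0 \<le> s \<Longrightarrow> s < 1 \<Longrightarrow> quantile M X s \<le> sqrt (E / (1 - s)) + 1"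
proof -
  note bounds = cdf_gt_if_square_integrable[OF assms(1-3), folded E_def] le_if_cdf_gt[OF assms(1,2,4)]
  show "quantile M X \<in> borel_measurable borel"
    using bounds by (intro borel_measurable_quantile[OF assms(1)]) blast
  show "0 \<le> quantile M X s" "quantile M X s \<le> sqrt (E / (1 - s)) + 1" if "0 \<le> s" "s < 1" for s
    using quantile_bounds[of s M X "sqrt (E / (1 - s)) + 1" 0] bounds that by auto
qed

lemma regular_density_hdens:
  fixes \<beta> lam C :: real
  assumes M: "prob_space M"
    and \<rho>: "\<rho> \<in> borel_measurable M" "integrable M (\<lambda>\<omega>. (\<rho> \<omega>)\<^sup>2)" "AE \<omega> in M. \<rho> \<omega> > 0"
    and X0: "X0 \<in> borel_measurable M" "AE \<omega> in M. \<bar>X0 \<omega>\<bar> \<le> C"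
    and lam: "lam > 0"
  defines "E \<equiv> integral\<^sup>L M (\<lambda>\<omega>. (\<rho> \<omega>)\<^sup>2)"
  shows "regular_density (hdens M \<rho> X0 \<beta> lam) (2 * \<beta> + 2 * C) (2 * \<bar>\<beta>\<bar> + lam * (sqrt (2 * E) + 1) + 2 * \<bar>C\<bar>)"
proof
  have "AE \<omega> in M. 0 \<le> \<rho> \<omega>"
    using \<rho>(3) by (auto elim!: eventually_mono)
  note Q\<rho> = quantile_of_nonneg_square_integrable[OF M \<rho>(1,2) this, folded E_def]
  note Q0 = quantile_of_bounded[OF M X0]
  show measurable: "hdens M \<rho> X0 \<beta> lam \<in> borel_measurable borel"
    using Q\<rho>(1) Q0(1) unfolding hdens_def[abs_def] by measurable
  have lam_Q\<rho>: "0 \<le> lam * quantile M \<rho> (1 - t)" "lam * quantile M \<rho> (1 - t) \<le> lam * (sqrt (E / t) + 1)"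
    if "0 < t" "t < 1" for t
    using Q\<rho>(2,3)[of "1 - t"] lam that by (auto intro: mult_left_mono)
  have abs_hdens_le: "\<bar>hdens M \<rho> X0 \<beta> lam t\<bar> \<le> 2 * \<bar>\<beta>\<bar> + lam * (sqrt (E / t) + 1) + 2 * \<bar>C\<bar>"
    if "0 < t" "t < 1" for t
    using lam_Q\<rho>[OF that] Q0(2)[of t] that abs_ge_self[of \<beta>] abs_ge_minus_self[of \<beta>]
    unfolding hdens_def abs_le_iff by fastforce
  show "set_integrable lborel {0..1} (hdens M \<rho> X0 \<beta> lam)"
    using abs_hdens_le
    by (intro set_integrable_if_inverse_sqrt_bound[OF measurable, where a = "2 * \<bar>\<beta>\<bar> + lam + 2 * \<bar>C\<bar>"
          and b = "lam * sqrt E"]) (simp add: real_sqrt_divide algebra_simps)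
  show "hdens M \<rho> X0 \<beta> lam t \<le> 2 * \<beta> + 2 * C" if "0 < t" "t < 1" for t
    using lam_Q\<rho>[OF that] Q0(2)[of t] that by (auto simp: hdens_def abs_le_iff)
  show "\<bar>hdens M \<rho> X0 \<beta> lam t\<bar> \<le> 2 * \<bar>\<beta>\<bar> + lam * (sqrt (2 * E) + 1) + 2 * \<bar>C\<bar>"
    if "1/2 \<le> t" "t < 1" for t
  proof -
    have "E * 1 \<le> E * (2 * t)"
      using that by (intro mult_left_mono) (auto simp: E_def)
    then have "E / t \<le> 2 * E"
      using that by (simp add: divide_le_eq algebra_simps)
    then have "lam * (sqrt (E / t) + 1) \<le> lam * (sqrt (2 * E) + 1)"
      using lam by (simp add: real_sqrt_le_mono)
    then show ?thesis
      using abs_hdens_le[of t] that by simp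
  qed
qed

theorem lemma5p4:
  fixes M :: "'a measure" and \<rho> X0 :: "'a \<Rightarrow> real" and \<beta> lam :: real
  assumes "prob_space M" and "complete_measure M" and "nonatomic M"
    and "\<rho> \<in> borel_measurable M" and "integrable M (\<lambda>\<omega>. (\<rho> \<omega>)^2)"
    and "AE \<omega> in M. \<rho> \<omega> > 0"
    and "prob_space.variance M \<rho> > 0"
    and "X0 \<in> borel_measurable M" and "\<exists>C. AE \<omega> in M. \<bar>X0 \<omega>\<bar> \<le> C"
    and "lam > 0"
  defines "H \<equiv> Hfun M \<rho> X0 \<beta> lam"
    and "Hhat \<equiv> concave_envelope (Hfun M \<rho> X0 \<beta> lam)"
    and "Gstar \<equiv> (\<lambda>s. max 0 (- rderiv (concave_envelope (Hfun M \<rho> X0 \<beta> lam)) s))"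
  shows "(\<forall>s\<in>{0..<1}. ((\<lambda>h. (Hhat (s + h) - Hhat s) / h) \<longlongrightarrow> rderiv Hhat s) (at_right 0))
    \<and> (\<exists>L. (rderiv Hhat \<longlongrightarrow> L) (at_left 1))
    \<and> (\<exists>C. \<forall>s\<in>{0..<1}. \<bar>Gstar s\<bar> \<le> C)
    \<and> Gstar \<in> Qclass \<and> (\<forall>s\<in>{0..<1}. Gstar s \<ge> 0)
    \<and> (\<forall>G\<in>Qclass. (\<forall>s\<in>{0..<1}. G s \<ge> 0) \<longrightarrow>
          objective (hdens M \<rho> X0 \<beta> lam) G \<le> objective (hdens M \<rho> X0 \<beta> lam) Gstar)
    \<and> (\<forall>G\<in>Qclass. (\<forall>s\<in>{0..<1}. G s \<ge> 0) \<longrightarrow>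
          objective (hdens M \<rho> X0 \<beta> lam) G = objective (hdens M \<rho> X0 \<beta> lam) Gstar \<longrightarrow>
          (\<forall>s\<in>{0..<1}. G s = Gstar s))
    \<and> (\<forall>G\<in>Qclass. (\<forall>s\<in>{0..<1}. G s \<ge> 0) \<longrightarrow>
          objective (rderiv Hhat) G \<le> objective (rderiv Hhat) Gstar)
    \<and> (\<forall>G\<in>Qclass. (\<forall>s\<in>{0..<1}. G s \<ge> 0) \<longrightarrow>
          objective (rderiv Hhat) G = objective (rderiv Hhat) Gstar \<longrightarrow>
          (\<forall>s\<in>{0..<1}. G s = Gstar s))
    \<and> objective (hdens M \<rho> X0 \<beta> lam) Gstar = objective (rderiv Hhat) Gstar"
proof -
  obtain C where "AE \<omega> in M. \<bar>X0 \<omega>\<bar> \<le> C"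
    using assms(9) by blast
  then obtain K A where "regular_density (hdens M \<rho> X0 \<beta> lam) K A"
    using regular_density_hdens[OF assms(1,4,5,6,8) _ assms(10)] by blast
  then interpret D: regular_density "hdens M \<rho> X0 \<beta> lam" K A .
  have Hfun_eq: "Hfun M \<rho> X0 \<beta> lam = D.H"
    by (rule ext) (simp add: Hfun_def D.H_def)
  have Hhat: "Hhat = concave_envelope D.H"
    unfolding Hhat_def Hfun_eq ..
  have Gstar: "Gstar = D.Gstar"
    unfolding Gstar_def Hfun_eq by (rule ext) (simp add: D.Gstar_def)
  show ?thesis
    unfolding Hhat Gstar
    using D.Hhat_has_right_derivative D.rderiv_Hhat_tendsto_left_1 D.bounded_Gstar D.Gstar_Qclass
      D.Gstar_nonneg D.Gstar_unique_maximizer D.objective_h_Gstar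
    by blast
qed
end
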